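(* In the setting of the context, let $\tau_N:D(A)\to\mathbb C^n$ ($N\ge1$) and $\tau$ be maps as in the context, with $\tau_N\to\tau$ in the norm of bounded operators from $D(A)$ (graph norm) to $\mathbb C^n$. Let $\Pi$ be an orthogonal projector on $\mathbb C^n$ and $\Theta_N,\Theta$ symmetric operators on $\mathbb C^n_\Pi$ with $\Theta_N\to\Theta$. Let $A_N^{\Pi,\Theta_N}$ be the self-adjoint extension of $A|_{\ker\tau_N}$ constructed with $\tau_N$, and $A^{\Pi,\Theta}$ that of $A|_{\ker\tau}$ constructed with $\tau$. Then $A_N^{\Pi,\Theta_N}\to A^{\Pi,\Theta}$ in norm resolvent sense as $N\to\infty$.
   Context: $\mathcal H$ is a Hilbert space and $A$ a self-adjoint operator on $\mathcal H$ with $-A>0$ (so $0\in\rho(A)$). A map $\tau:D(A)\to\mathbb C^n$ ($n\ge1$) is admissible if it is linear, surjective, bounded for the graph norm of $A$, with $\ker\tau$ dense in $\mathcal H$; then $A|_{\ker\tau}$ is closed symmetric. For such $\tau$ and $z\in\rho(A)$ let $G_z:=(\tau(-A+\bar z)^{-1})^*:\mathbb C^n\to\mathcal H$. For an orthogonal projector $\Pi$ on $\mathbb C^n$ and a symmetric operator $\Theta$ on $\mathbb C^n_\Pi:=\mathrm{Ran}\,\Pi$, the extension constructed with $\tau$ is $A^{\Pi,\Theta}\phi:=A\phi_0$ on $D(A^{\Pi,\Theta}):=\{\phi=\phi_0+G_0\xi:\ \phi_0\in D(A),\ \xi\in\mathbb C^n_\Pi,\ \Pi\tau\phi_0=\Theta\xi\}$;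 it is self-adjoint and its resolvent is $(-A^{\Pi,\Theta}+z)^{-1}=(-A+z)^{-1}+G_z\Pi(\Theta+z\Pi G_0^*G_z\Pi)^{-1}\Pi G_{\bar z}^*$. All $\tau_N$ and $\tau$ are assumed admissible. *)

theory Defs
  imports "HOL-Analysis.Analysis"
begin

text \<open>A complex Hilbert space is modelled as a real Banach space type 'h together with
  a complex scalar multiplication sm (extending scaleR) and an inner product ip,
  conjugate-linear in the first and linear in the second argument, inducing the norm.\<close>

definition complex_hilbert :: "(complex \<Rightarrow> 'h::banach \<Rightarrow> 'h) \<Rightarrow> ('h \<Rightarrow> 'h \<Rightarrow> complex) \<Rightarrow> bool" where
  "complex_hilbert sm ip \<longleftrightarrow>
     (\<forall>a b x. sm a (sm b x) = sm (a * b) x) \<and> (\<forall>x. sm 1 x = x) \<and>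
     (\<forall>a x y. sm a (x + y) = sm a x + sm a y) \<and> (\<forall>a b x. sm (a + b) x = sm a x + sm b x) \<and>
     (\<forall>r x. sm (complex_of_real r) x = scaleR r x) \<and>
     (\<forall>x y z. ip x (y + z) = ip x y + ip x z) \<and> (\<forall>a x y. ip x (sm a y) = a * ip x y) \<and>
     (\<forall>x y. ip y x = cnj (ip x y)) \<and> (\<forall>x. ip x x = complex_of_real ((norm x)\<^sup>2))"

definition cinner_vec :: "complex ^ 'n::finite \<Rightarrow> complex ^ 'n \<Rightarrow> complex" where
  "cinner_vec x y = (\<Sum>i\<in>UNIV. cnj (x $ i) * y $ i)"

definition csubspace_on :: "(complex \<Rightarrow> 'h \<Rightarrow> 'h) \<Rightarrow> ('h::real_vector) set \<Rightarrow> bool" where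
  "csubspace_on sm D \<longleftrightarrow> 0 \<in> D \<and> (\<forall>x\<in>D. \<forall>y\<in>D. x + y \<in> D) \<and> (\<forall>a. \<forall>x\<in>D. sm a x \<in> D)"

definition self_adjoint_op :: "(complex \<Rightarrow> 'h \<Rightarrow> 'h) \<Rightarrow> ('h \<Rightarrow> 'h \<Rightarrow> complex) \<Rightarrow> ('h::real_normed_vector) set \<Rightarrow> ('h \<Rightarrow> 'h) \<Rightarrow> bool" where
  "self_adjoint_op sm ip D A \<longleftrightarrow>
     csubspace_on sm D \<and> closure D = UNIV \<and>
     (\<forall>x\<in>D. \<forall>y\<in>D. A (x + y) = A x + A y) \<and> (\<forall>a. \<forall>x\<in>D. A (sm a x) = sm a (A x)) \<and>
     (\<forall>x\<in>D. \<forall>y\<in>D. ip (A x) y = ip x (A y)) \<and>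
     {\<psi>. \<exists>\<eta>. \<forall>\<phi>\<in>D. ip (A \<phi>) \<psi> = ip \<phi> \<eta>} \<subseteq> D"

definition neg_strictly_positive :: "('h \<Rightarrow> 'h \<Rightarrow> complex) \<Rightarrow> ('h::real_normed_vector) set \<Rightarrow> ('h \<Rightarrow> 'h) \<Rightarrow> bool" where
  "neg_strictly_positive ip D A \<longleftrightarrow> (\<exists>c>0. \<forall>\<phi>\<in>D. c * (norm \<phi>)\<^sup>2 \<le> Re (ip \<phi> (- A \<phi>)))"

definition graph_norm :: "('h \<Rightarrow> 'h) \<Rightarrow> 'h::real_normed_vector \<Rightarrow> real" where
  "graph_norm A \<phi> = sqrt ((norm \<phi>)\<^sup>2 + (norm (A \<phi>))\<^sup>2)"

definition graph_op_norm :: "('h::real_normed_vector) set \<Rightarrow> ('h \<Rightarrow> 'h) \<Rightarrow> ('h \<Rightarrow> complex ^ 'n::finite) \<Rightarrow> real" where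
  "graph_op_norm D A f = Sup {norm (f \<phi>) | \<phi>. \<phi> \<in> D \<and> graph_norm A \<phi> \<le> 1}"

definition admissible :: "(complex \<Rightarrow> 'h \<Rightarrow> 'h) \<Rightarrow> ('h::real_normed_vector) set \<Rightarrow> ('h \<Rightarrow> 'h) \<Rightarrow> ('h \<Rightarrow> complex ^ 'n::finite) \<Rightarrow> bool" where
  "admissible sm D A \<tau> \<longleftrightarrow>
     (\<forall>x\<in>D. \<forall>y\<in>D. \<tau> (x + y) = \<tau> x + \<tau> y) \<and> (\<forall>a. \<forall>x\<in>D. \<tau> (sm a x) = a *s \<tau> x) \<and>
     \<tau> ` D = UNIV \<and>
     (\<exists>C. \<forall>\<phi>\<in>D. norm (\<tau> \<phi>) \<le> C * graph_norm A \<phi>) \<and>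
     closure {\<phi>\<in>D. \<tau> \<phi> = 0} = UNIV"

definition resolv :: "(complex \<Rightarrow> 'h \<Rightarrow> 'h) \<Rightarrow> ('h::real_vector) set \<Rightarrow> ('h \<Rightarrow> 'h) \<Rightarrow> complex \<Rightarrow> 'h \<Rightarrow> 'h" where
  "resolv sm D B z \<psi> = (THE \<phi>. \<phi> \<in> D \<and> sm z \<phi> - B \<phi> = \<psi>)"

text \<open>G_z = (\<tau> (-A + cnj z)^{-1})^* : C^n \<rightarrow> H.\<close>
definition Gmap :: "(complex \<Rightarrow> 'h \<Rightarrow> 'h) \<Rightarrow> ('h \<Rightarrow> 'h \<Rightarrow> complex) \<Rightarrow> ('h::real_vector) set \<Rightarrow> ('h \<Rightarrow> 'h)
     \<Rightarrow> ('h \<Rightarrow> complex ^ 'n::finite) \<Rightarrow> complex \<Rightarrow> complex ^ 'n \<Rightarrow> 'h" where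
  "Gmap sm ip D A \<tau> z \<xi> = (THE g. \<forall>\<psi>. ip g \<psi> = cinner_vec \<xi> (\<tau> (resolv sm D A (cnj z) \<psi>)))"

definition hermitian_mat :: "complex ^ 'n ^ 'n \<Rightarrow> bool" where
  "hermitian_mat M \<longleftrightarrow> (\<forall>i j. M $ i $ j = cnj (M $ j $ i))"

definition ortho_projector :: "complex ^ 'n ^ 'n \<Rightarrow> bool" where
  "ortho_projector P \<longleftrightarrow> P ** P = P \<and> hermitian_mat P"

text \<open>A symmetric operator on Ran P, encoded as the hermitian matrix \<Theta> with P \<Theta> = \<Theta> = \<Theta> P
  (i.e. the operator on Ran P extended by 0 on its orthogonal complement).\<close>
definition symmetric_on_ran :: "complex ^ 'n ^ 'n \<Rightarrow> complex ^ 'n ^ 'n \<Rightarrow> bool" where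
  "symmetric_on_ran P \<Theta> \<longleftrightarrow> hermitian_mat \<Theta> \<and> P ** \<Theta> = \<Theta> \<and> \<Theta> ** P = \<Theta>"

definition ext_dom :: "(complex \<Rightarrow> 'h \<Rightarrow> 'h) \<Rightarrow> ('h \<Rightarrow> 'h \<Rightarrow> complex) \<Rightarrow> ('h::real_vector) set \<Rightarrow> ('h \<Rightarrow> 'h)
     \<Rightarrow> ('h \<Rightarrow> complex ^ 'n::finite) \<Rightarrow> complex ^ 'n ^ 'n \<Rightarrow> complex ^ 'n ^ 'n \<Rightarrow> 'h set" where
  "ext_dom sm ip D A \<tau> P \<Theta> =
     {\<phi>0 + Gmap sm ip D A \<tau> 0 \<xi> | \<phi>0 \<xi>. \<phi>0 \<in> D \<and> P *v \<xi> = \<xi> \<and> P *v \<tau> \<phi>0 = \<Theta> *v \<xi>}"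

definition ext_op :: "(complex \<Rightarrow> 'h \<Rightarrow> 'h) \<Rightarrow> ('h \<Rightarrow> 'h \<Rightarrow> complex) \<Rightarrow> ('h::real_vector) set \<Rightarrow> ('h \<Rightarrow> 'h)
     \<Rightarrow> ('h \<Rightarrow> complex ^ 'n::finite) \<Rightarrow> complex ^ 'n ^ 'n \<Rightarrow> complex ^ 'n ^ 'n \<Rightarrow> 'h \<Rightarrow> 'h" where
  "ext_op sm ip D A \<tau> P \<Theta> \<phi> =
     A (SOME \<phi>0. \<phi>0 \<in> D \<and> (\<exists>\<xi>. P *v \<xi> = \<xi> \<and> P *v \<tau> \<phi>0 = \<Theta> *v \<xi> \<and> \<phi> = \<phi>0 + Gmap sm ip D A \<tau> 0 \<xi>))"

definition norm_resolvent_conv :: "(complex \<Rightarrow> 'h \<Rightarrow> 'h) \<Rightarrow> (nat \<Rightarrow> ('h::real_normed_vector) set) \<Rightarrow> (nat \<Rightarrow> 'h \<Rightarrow> 'h)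
     \<Rightarrow> 'h set \<Rightarrow> ('h \<Rightarrow> 'h) \<Rightarrow> bool" where
  "norm_resolvent_conv sm DN BN D B \<longleftrightarrow>
     (\<forall>z. Im z \<noteq> 0 \<longrightarrow>
        (\<lambda>N. onorm (\<lambda>\<psi>. resolv sm (DN N) (BN N) z \<psi> - resolv sm D B z \<psi>)) \<longlonglongrightarrow> 0)"

end

theory Submission
  imports Defs
begin

text \<open>By Krein's formula, the resolvent of \<open>A\<^sup>\<Pi>\<^sup>,\<^sup>\<Theta>\<close> at a non-real \<open>z\<close> is
  \<open>R\<^sub>z + G\<^sub>z \<Pi> (\<Theta> + z \<Pi> G\<^sub>0\<^sup>* G\<^sub>z \<Pi>)\<^sup>-\<^sup>1 \<Pi> G\<^bsub>cnj z\<^esub>\<^sup>*\<close>, and every factor depends continuously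
  on \<open>\<tau>\<close> and \<open>\<Theta>\<close> in operator norm. Indeed \<open>G\<^bsub>cnj z\<^esub>\<^sup>* = \<tau> R\<^sub>z\<close> and \<open>G\<^sub>0\<^sup>* = \<tau> R\<^sub>0\<close> move by at most
  \<open>\<parallel>\<tau>\<^sub>N - \<tau>\<parallel>\<close> times the norm of the resolvent as a map into \<open>D(A)\<close> with the graph norm, the maps
  \<open>G\<^sub>0, G\<^sub>z\<close> follow by duality, and inversion is continuous at the invertible matrix in the middle.
  Sums and products of norm convergent sequences converge in norm, which gives the theorem.\<close>

section \<open>Convergence of bounded linear operators in operator norm\<close>

definition op_tendsto :: "(nat \<Rightarrow> 'a::real_normed_vector \<Rightarrow> 'b::real_normed_vector) \<Rightarrow> ('a \<Rightarrow> 'b) \<Rightarrow> bool" where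
  "op_tendsto F F0 \<longleftrightarrow> (\<forall>\<^sub>F N in sequentially. bounded_linear (F N)) \<and> bounded_linear F0 \<and>
     (\<lambda>N. onorm (\<lambda>x. F N x - F0 x)) \<longlonglongrightarrow> 0"

lemma op_tendsto_if_onorm_le:
  assumes lin: "\<forall>\<^sub>F N in sequentially. bounded_linear (F N)" "bounded_linear F0"
    and le: "\<forall>\<^sub>F N in sequentially. onorm (\<lambda>x. F N x - F0 x) \<le> \<beta> N" and \<beta>: "\<beta> \<longlonglongrightarrow> 0"
  shows "op_tendsto F F0"
proof -
  have "\<forall>\<^sub>F N in sequentially. 0 \<le> onorm (\<lambda>x. F N x - F0 x)"
    using lin(1) by eventually_elim (rule onorm_pos_le[OF bounded_linear_sub[OF _ lin(2)]])
  then have "(\<lambda>N. onorm (\<lambda>x. F N x - F0 x)) \<longlonglongrightarrow> 0"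
    by (rule tendsto_sandwich[OF _ le tendsto_const \<beta>])
  then show ?thesis using lin by (simp add: op_tendsto_def)
qed

lemma op_tendstoI:
  assumes lin: "\<forall>\<^sub>F N in sequentially. bounded_linear (F N)" "bounded_linear F0"
    and bound: "\<forall>\<^sub>F N in sequentially. \<forall>x. norm (F N x - F0 x) \<le> \<beta> N * norm x"
    and \<beta>: "\<beta> \<longlonglongrightarrow> 0"
  shows "op_tendsto F F0"
proof (rule op_tendsto_if_onorm_le[OF lin])
  show "\<forall>\<^sub>F N in sequentially. onorm (\<lambda>x. F N x - F0 x) \<le> max (\<beta> N) 0"
    using bound by eventually_elim (rule onorm_bound[OF max.cobounded2],
        meson max.cobounded1 mult_right_mono norm_ge_zero order_trans)
  show "(\<lambda>N. max (\<beta> N) 0) \<longlonglongrightarrow> 0"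
    using tendsto_max[OF \<beta> tendsto_const[of 0]] by simp
qed

lemma op_tendsto_onorm: "op_tendsto F F0 \<Longrightarrow> (\<lambda>N. onorm (\<lambda>x. F N x - F0 x)) \<longlonglongrightarrow> 0"
  by (simp add: op_tendsto_def)

lemma op_tendsto_bounded_linear:
  "op_tendsto F F0 \<Longrightarrow> \<forall>\<^sub>F N in sequentially. bounded_linear (F N)"
  "op_tendsto F F0 \<Longrightarrow> bounded_linear F0"
  by (simp_all add: op_tendsto_def)

lemma op_tendsto_const: "bounded_linear F \<Longrightarrow> op_tendsto (\<lambda>N. F) F"
  by (simp add: op_tendsto_def onorm_zero)

lemma op_tendsto_cong:
  assumes "\<forall>\<^sub>F N in sequentially. F N = F' N" and "op_tendsto F F0"
  shows "op_tendsto F' F0"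
proof -
  have "\<forall>\<^sub>F N in sequentially. bounded_linear (F' N)"
    using assms(1) op_tendsto_bounded_linear(1)[OF assms(2)] by eventually_elim simp
  moreover have "\<forall>\<^sub>F N in sequentially. onorm (\<lambda>x. F N x - F0 x) = onorm (\<lambda>x. F' N x - F0 x)"
    using assms(1) by eventually_elim simp
  then have "(\<lambda>N. onorm (\<lambda>x. F' N x - F0 x)) \<longlonglongrightarrow> 0"
    by (rule Lim_transform_eventually[OF op_tendsto_onorm[OF assms(2)]])
  ultimately show ?thesis using assms(2) by (simp add: op_tendsto_def)
qed

lemma op_tendsto_add:
  assumes F: "op_tendsto F F0" and G: "op_tendsto G G0"
  shows "op_tendsto (\<lambda>N x. F N x + G N x) (\<lambda>x. F0 x + G0 x)"
proof -
  have lin: "\<forall>\<^sub>F N in sequentially. bounded_linear (F N) \<and> bounded_linear (G N)"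
    using op_tendsto_bounded_linear(1)[OF F] op_tendsto_bounded_linear(1)[OF G]
    by (rule eventually_conj)
  have F0: "bounded_linear F0" and G0: "bounded_linear G0"
    using op_tendsto_bounded_linear(2) F G by blast+
  show ?thesis
  proof (rule op_tendsto_if_onorm_le)
    show "\<forall>\<^sub>F N in sequentially. bounded_linear (\<lambda>x. F N x + G N x)"
      using lin by eventually_elim (elim conjE, rule bounded_linear_add)
    show "bounded_linear (\<lambda>x. F0 x + G0 x)" by (rule bounded_linear_add[OF F0 G0])
    show "\<forall>\<^sub>F N in sequentially. onorm (\<lambda>x. F N x + G N x - (F0 x + G0 x))
        \<le> onorm (\<lambda>x. F N x - F0 x) + onorm (\<lambda>x. G N x - G0 x)"
      using lin
    proof eventually_elim
      case (elim N)
      then have dF: "bounded_linear (\<lambda>x. F N x - F0 x)" and dG: "bounded_linear (\<lambda>x. G N x - G0 x)"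
        using F0 G0 bounded_linear_sub by blast+
      have "(\<lambda>x. F N x + G N x - (F0 x + G0 x)) = (\<lambda>x. (F N x - F0 x) + (G N x - G0 x))"
        by (simp add: algebra_simps)
      then show ?case using onorm_triangle[OF dF dG] by simp
    qed
    show "(\<lambda>N. onorm (\<lambda>x. F N x - F0 x) + onorm (\<lambda>x. G N x - G0 x)) \<longlonglongrightarrow> 0"
      using tendsto_add[OF op_tendsto_onorm[OF F] op_tendsto_onorm[OF G]] by simp
  qed
qed

text \<open>\<open>F\<^sub>N G\<^sub>N - F G = F\<^sub>N (G\<^sub>N - G) + (F\<^sub>N - F) G\<close> and \<open>\<parallel>F\<^sub>N\<parallel> \<le> \<parallel>F\<parallel> + \<parallel>F\<^sub>N - F\<parallel>\<close>.\<close>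

lemma onorm_compose_diff_le:
  assumes FN: "bounded_linear FN" and GN: "bounded_linear GN"
    and F0: "bounded_linear F0" and G0: "bounded_linear G0"
  shows "onorm (\<lambda>x. FN (GN x) - F0 (G0 x))
    \<le> (onorm F0 + onorm (\<lambda>x. FN x - F0 x)) * onorm (\<lambda>x. GN x - G0 x)
      + onorm (\<lambda>x. FN x - F0 x) * onorm G0"
proof -
  let ?a = "onorm (\<lambda>x. FN x - F0 x)" and ?b = "onorm (\<lambda>x. GN x - G0 x)"
  have dF: "bounded_linear (\<lambda>x. FN x - F0 x)" and dG: "bounded_linear (\<lambda>x. GN x - G0 x)"
    using FN GN F0 G0 by (auto intro: bounded_linear_sub)
  have split: "(\<lambda>x. FN (GN x) - F0 (G0 x)) = (\<lambda>x. FN (GN x - G0 x) + (FN (G0 x) - F0 (G0 x)))"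
  proof
    fix x
    have "FN (GN x - G0 x) = FN (GN x) - FN (G0 x)"
      by (rule linear_diff[OF bounded_linear.linear[OF FN]])
    then show "FN (GN x) - F0 (G0 x) = FN (GN x - G0 x) + (FN (G0 x) - F0 (G0 x))"
      by (simp add: algebra_simps)
  qed
  have "onorm (\<lambda>x. FN (GN x) - F0 (G0 x))
      \<le> onorm (\<lambda>x. FN (GN x - G0 x)) + onorm (\<lambda>x. FN (G0 x) - F0 (G0 x))"
    unfolding split
    by (rule onorm_triangle[OF bounded_linear_compose[OF FN dG] bounded_linear_compose[OF dF G0]])
  also have "\<dots> \<le> onorm FN * ?b + ?a * onorm G0"
    by (rule add_mono[OF onorm_compose[OF FN dG, unfolded o_def] onorm_compose[OF dF G0, unfolded o_def]])
  also have "\<dots> \<le> (onorm F0 + ?a) * ?b + ?a * onorm G0"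
    using onorm_triangle[OF F0 dF] onorm_pos_le[OF dG] by (simp add: mult_right_mono)
  finally show ?thesis .
qed

lemma op_tendsto_compose:
  assumes F: "op_tendsto F F0" and G: "op_tendsto G G0"
  shows "op_tendsto (\<lambda>N x. F N (G N x)) (\<lambda>x. F0 (G0 x))"
proof -
  let ?a = "\<lambda>N. onorm (\<lambda>x. F N x - F0 x)" and ?b = "\<lambda>N. onorm (\<lambda>x. G N x - G0 x)"
  have lin: "\<forall>\<^sub>F N in sequentially. bounded_linear (F N) \<and> bounded_linear (G N)"
    using op_tendsto_bounded_linear(1)[OF F] op_tendsto_bounded_linear(1)[OF G]
    by (rule eventually_conj)
  have F0: "bounded_linear F0" and G0: "bounded_linear G0"
    using op_tendsto_bounded_linear(2) F G by blast+
  show ?thesis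
  proof (rule op_tendsto_if_onorm_le)
    show "\<forall>\<^sub>F N in sequentially. bounded_linear (\<lambda>x. F N (G N x))"
      using lin by eventually_elim (elim conjE, rule bounded_linear_compose)
    show "bounded_linear (\<lambda>x. F0 (G0 x))" by (rule bounded_linear_compose[OF F0 G0])
    show "\<forall>\<^sub>F N in sequentially. onorm (\<lambda>x. F N (G N x) - F0 (G0 x))
        \<le> (onorm F0 + ?a N) * ?b N + ?a N * onorm G0"
      using lin by eventually_elim (use onorm_compose_diff_le F0 G0 in blast)
    have "(\<lambda>N. (onorm F0 + ?a N) * ?b N + ?a N * onorm G0) \<longlonglongrightarrow> (onorm F0 + 0) * 0 + 0 * onorm G0"
      by (intro tendsto_intros op_tendsto_onorm F G)
    then show "(\<lambda>N. (onorm F0 + ?a N) * ?b N + ?a N * onorm G0) \<longlonglongrightarrow> 0" by simp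
  qed
qed

text \<open>Stability of inverses: once \<open>\<parallel>L - L\<^sub>0\<parallel> \<le> \<delta>/2\<close>, where \<open>\<delta>\<close> bounds \<open>L\<^sub>0\<close> from below,
  \<open>L\<close> is bounded below by \<open>\<delta>/2\<close>, and \<open>L\<^sup>-\<^sup>1 - L\<^sub>0\<^sup>-\<^sup>1 = L\<^sup>-\<^sup>1 (L\<^sub>0 - L) L\<^sub>0\<^sup>-\<^sup>1\<close>.\<close>

lemma norm_inv_diff_le:
  fixes L L0 :: "'a::euclidean_space \<Rightarrow> 'a"
  assumes L: "bounded_linear L" "inj L" and L0: "bounded_linear L0" "inj L0"
    and \<delta>: "\<delta> > 0" and below: "\<And>x. \<delta> * norm x \<le> norm (L0 x)"
    and small: "onorm (\<lambda>x. L x - L0 x) \<le> \<delta> / 2"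
  shows "norm (inv L y - inv L0 y) \<le> (2 * onorm (\<lambda>x. L x - L0 x) / \<delta>\<^sup>2) * norm y"
proof -
  let ?\<epsilon> = "onorm (\<lambda>x. L x - L0 x)"
  have diff: "bounded_linear (\<lambda>x. L x - L0 x)" using L L0 bounded_linear_sub by blast
  have inv: "L (inv L y) = y" "L0 (inv L0 y) = y"
    using L L0 eucl.linear_inj_imp_surj by (metis bounded_linear.linear surj_f_inv_f)+
  have belowL: "\<delta> / 2 * norm x \<le> norm (L x)" for x
  proof -
    have "norm (L x - L0 x) \<le> \<delta> / 2 * norm x"
      using onorm[OF diff, of x] small by (meson mult_right_mono norm_ge_zero order_trans)
    then show ?thesis using below[of x] norm_triangle_ineq3[of "L x" "L0 x"] by linarith
  qed
  define x0 where "x0 = inv L0 y"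
  have "\<delta> * norm x0 \<le> norm y" using below[of x0] by (simp add: x0_def inv)
  then have x0: "norm x0 \<le> norm y / \<delta>" using \<delta> by (simp add: field_simps)
  have "L (inv L y - x0) = L0 x0 - L x0"
    using linear_diff[OF bounded_linear.linear[OF L(1)]] by (simp add: inv x0_def)
  then have "\<delta> / 2 * norm (inv L y - x0) \<le> ?\<epsilon> * norm x0"
    using belowL[of "inv L y - x0"] onorm[OF diff, of x0] by (simp add: norm_minus_commute)
  also have "\<dots> \<le> ?\<epsilon> * (norm y / \<delta>)"
    by (rule mult_left_mono[OF x0 onorm_pos_le[OF diff]])
  finally show ?thesis
    using \<delta> by (simp add: x0_def divide_simps power2_eq_square mult.commute mult.left_commute)
qed

lemma op_tendsto_inv:
  fixes L :: "nat \<Rightarrow> 'a::euclidean_space \<Rightarrow> 'a" and L0 :: "'a \<Rightarrow> 'a"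
  assumes inj: "\<forall>\<^sub>F N in sequentially. inj (L N)" "inj L0" and conv: "op_tendsto L L0"
  shows "op_tendsto (\<lambda>N. inv (L N)) (inv L0)"
proof -
  let ?\<epsilon> = "\<lambda>N. onorm (\<lambda>x. L N x - L0 x)"
  have bl0: "bounded_linear L0" using conv by (simp add: op_tendsto_def)
  obtain \<delta> where \<delta>: "\<delta> > 0" and below: "\<And>x. \<delta> * norm x \<le> norm (L0 x)"
    using injective_imp_isometric[OF closed_UNIV subspace_UNIV bl0] inj(2)
    by (metis UNIV_I inj_eq bounded_linear.linear[OF bl0] linear_0)
  have \<epsilon>: "?\<epsilon> \<longlonglongrightarrow> 0" by (rule op_tendsto_onorm[OF conv])
  have small: "\<forall>\<^sub>F N in sequentially. ?\<epsilon> N < \<delta> / 2"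
    using order_tendstoD(2)[OF \<epsilon>, of "\<delta> / 2"] \<delta> by simp
  have blinv: "bounded_linear (inv F)" if "bounded_linear F" "inj F" for F :: "'a \<Rightarrow> 'a"
    using that eucl.inj_linear_imp_inv_linear linear_conv_bounded_linear by blast
  show ?thesis
  proof (rule op_tendstoI)
    show "\<forall>\<^sub>F N in sequentially. bounded_linear (inv (L N))"
      using op_tendsto_bounded_linear(1)[OF conv] inj(1) by eventually_elim (rule blinv)
    show "bounded_linear (inv L0)" by (rule blinv[OF bl0 inj(2)])
    show "\<forall>\<^sub>F N in sequentially. \<forall>y. norm (inv (L N) y - inv L0 y) \<le> (2 * ?\<epsilon> N / \<delta>\<^sup>2) * norm y"
      using op_tendsto_bounded_linear(1)[OF conv] inj(1) small
    proof (eventually_elim, intro allI)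
      case (elim N)
      show "norm (inv (L N) y - inv L0 y) \<le> (2 * ?\<epsilon> N / \<delta>\<^sup>2) * norm y" for y
        by (rule norm_inv_diff_le) (use elim bl0 inj(2) \<delta> below in auto)
    qed
    show "(\<lambda>N. 2 * ?\<epsilon> N / \<delta>\<^sup>2) \<longlonglongrightarrow> 0"
      using tendsto_divide_zero[OF tendsto_mult_right_zero[OF \<epsilon>, of 2], of "\<delta>\<^sup>2"] by simp
  qed
qed

section \<open>The inner product and matrices on \<open>\<complex>\<^sup>n\<close>\<close>

lemma norm_vec_le_sum: "norm (x :: 'a::real_normed_vector ^ 'n::finite) \<le> (\<Sum>i\<in>UNIV. norm (x $ i))"
  unfolding norm_vec_def by (rule L2_set_le_sum) auto

lemma cinner_vec_add_left: "cinner_vec (x + y) z = cinner_vec x z + cinner_vec y z"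
  by (simp add: cinner_vec_def distrib_right sum.distrib)

lemma cinner_vec_add_right: "cinner_vec x (y + z) = cinner_vec x y + cinner_vec x z"
  by (simp add: cinner_vec_def distrib_left sum.distrib)

lemma cinner_vec_diff_right: "cinner_vec x (y - z) = cinner_vec x y - cinner_vec x z"
  by (simp add: cinner_vec_def right_diff_distrib sum_subtractf)

lemma cinner_vec_smult_left: "cinner_vec (a *s x) y = cnj a * cinner_vec x y"
  by (simp add: cinner_vec_def sum_distrib_left algebra_simps)

lemma cinner_vec_smult_right: "cinner_vec x (a *s y) = a * cinner_vec x y"
  by (simp add: cinner_vec_def sum_distrib_left algebra_simps)

lemma cinner_vec_zero_right [simp]: "cinner_vec x 0 = 0"
  by (simp add: cinner_vec_def)

lemma cinner_vec_commute: "cinner_vec y x = cnj (cinner_vec x y)"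
  by (simp add: cinner_vec_def mult.commute)

lemma cinner_vec_axis: "cinner_vec x (axis i 1) = cnj (x $ i)"
  by (simp add: cinner_vec_def axis_def if_distrib cong: if_cong)

lemma norm_cinner_vec_le: "cmod (cinner_vec x y) \<le> real CARD('n) * norm x * norm (y :: complex ^ 'n::finite)"
proof -
  have "cmod (cinner_vec x y) \<le> (\<Sum>i\<in>UNIV. cmod (cnj (x $ i) * y $ i))"
    unfolding cinner_vec_def by (rule norm_sum)
  also have "\<dots> \<le> (\<Sum>i\<in>(UNIV::'n set). norm x * norm y)"
    by (rule sum_mono) (simp add: norm_mult mult_mono Finite_Cartesian_Product.norm_nth_le)
  finally show ?thesis by simp
qed

lemma norm_matrix_vector_mult_le:
  fixes M :: "complex ^ 'n ^ 'n::finite"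
  shows "norm (M *v x) \<le> (real CARD('n))\<^sup>2 * norm M * norm x"
proof -
  have entry: "norm ((M *v x) $ i) \<le> real CARD('n) * norm M * norm x" for i
  proof -
    have "norm ((M *v x) $ i) \<le> (\<Sum>j\<in>UNIV. norm (M $ i $ j * x $ j))"
      unfolding matrix_vector_mult_def by (simp add: norm_sum)
    also have "\<dots> \<le> (\<Sum>j\<in>(UNIV::'n set). norm M * norm x)"
    proof (rule sum_mono)
      fix j
      have "norm (M $ i $ j) \<le> norm M"
        using Finite_Cartesian_Product.norm_nth_le[of "M $ i" j] Finite_Cartesian_Product.norm_nth_le[of M i] by linarith
      then show "norm (M $ i $ j * x $ j) \<le> norm M * norm x"
        by (simp add: norm_mult mult_mono Finite_Cartesian_Product.norm_nth_le)
    qed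
    finally show ?thesis by simp
  qed
  have "norm (M *v x) \<le> (\<Sum>i\<in>UNIV. norm ((M *v x) $ i))" by (rule norm_vec_le_sum)
  also have "\<dots> \<le> (\<Sum>i\<in>(UNIV::'n set). real CARD('n) * norm M * norm x)"
    by (rule sum_mono) (rule entry)
  finally show ?thesis by (simp add: power2_eq_square)
qed

lemma bounded_linear_matrix_vector_mult: "bounded_linear (\<lambda>x. (M :: complex ^ 'n ^ 'n::finite) *v x)"
  using matrix_vector_mul_linear linear_conv_bounded_linear by blast

lemma smult_of_real: "complex_of_real r *s v = r *\<^sub>R (v :: complex ^ 'n)"
  unfolding vec_eq_iff vector_smult_component vector_scaleR_component by (simp add: scaleR_conv_of_real)

lemma bounded_linear_vector_smult: "bounded_linear (\<lambda>x. (a::complex) *s (x :: complex ^ 'n::finite))"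
  unfolding linear_conv_bounded_linear[symmetric]
  by (rule linearI) (simp_all add: vec_eq_iff algebra_simps)

lemma op_tendsto_matrix_vector_mult:
  assumes "M \<longlonglongrightarrow> (M0 :: complex ^ 'n ^ 'n::finite)"
  shows "op_tendsto (\<lambda>N x. M N *v x) (\<lambda>x. M0 *v x)"
proof (rule op_tendstoI)
  show "\<forall>\<^sub>F N in sequentially. \<forall>x. norm (M N *v x - M0 *v x) \<le> (real CARD('n))\<^sup>2 * norm (M N - M0) * norm x"
    by (simp add: norm_matrix_vector_mult_le flip: matrix_vector_mult_diff_rdistrib)
  have "(\<lambda>N. norm (M N - M0)) \<longlonglongrightarrow> 0" using assms by (simp add: tendsto_norm_zero_iff LIM_zero)
  then show "(\<lambda>N. (real CARD('n))\<^sup>2 * norm (M N - M0)) \<longlonglongrightarrow> 0"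
    using tendsto_mult_right_zero by blast
qed (simp_all add: bounded_linear_matrix_vector_mult)

lemma cinner_vec_hermitian: "hermitian_mat M \<Longrightarrow> cinner_vec (M *v x) y = cinner_vec x (M *v y)"
proof -
  assume h: "hermitian_mat M"
  have "cinner_vec (M *v x) y = (\<Sum>i\<in>UNIV. \<Sum>j\<in>UNIV. cnj (M $ i $ j) * cnj (x $ j) * y $ i)"
    by (simp add: cinner_vec_def matrix_vector_mult_def sum_distrib_right)
  also have "\<dots> = (\<Sum>j\<in>UNIV. \<Sum>i\<in>UNIV. cnj (M $ i $ j) * cnj (x $ j) * y $ i)" by (rule sum.swap)
  also have "\<dots> = (\<Sum>j\<in>UNIV. \<Sum>i\<in>UNIV. cnj (x $ j) * (M $ j $ i * y $ i))"
    using h unfolding hermitian_mat_def by (intro sum.cong refl) (metis complex_cnj_cnj mult.commute mult.left_commute)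
  also have "\<dots> = cinner_vec x (M *v y)"
    by (simp add: cinner_vec_def matrix_vector_mult_def sum_distrib_left)
  finally show ?thesis .
qed

lemma Im_cinner_vec_hermitian: "hermitian_mat M \<Longrightarrow> Im (cinner_vec x (M *v x)) = 0"
  using cinner_vec_hermitian[of M x x] cinner_vec_commute[of "M *v x" x]
  by (metis cnj.simps(2) neg_equal_zero)

section \<open>Complex Hilbert spaces\<close>

lemma Cauchy_if_dist_le_vanishing:
  fixes f :: "nat \<Rightarrow> 'a::metric_space"
  assumes "\<And>m n. dist (f m) (f n) \<le> b m + b n" and "b \<longlonglongrightarrow> 0"
  shows "Cauchy f"
proof (rule metric_CauchyI)
  fix e :: real assume "e > 0"
  then obtain K where K: "\<And>k. k \<ge> K \<Longrightarrow> b k < e / 2"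
    using order_tendstoD(2)[OF assms(2), of "e / 2"] by (auto simp: eventually_sequentially)
  then have "dist (f m) (f n) < e" if "m \<ge> K" "n \<ge> K" for m n
    using assms(1)[of m n] K[OF that(1)] K[OF that(2)] by linarith
  then show "\<exists>K. \<forall>m\<ge>K. \<forall>n\<ge>K. dist (f m) (f n) < e" by blast
qed

lemma Cauchy_if_dist_le_scaled:
  fixes f :: "nat \<Rightarrow> 'a::metric_space" and x :: "nat \<Rightarrow> 'b::metric_space"
  assumes "Cauchy x" and "\<And>m n. dist (f m) (f n) \<le> dist (x m) (x n) / c" and "c > 0"
  shows "Cauchy f"
proof (rule metric_CauchyI)
  fix e :: real assume "e > 0"
  then obtain M where M: "\<forall>m\<ge>M. \<forall>n\<ge>M. dist (x m) (x n) < c * e"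
    using assms(1,3) unfolding Cauchy_def by (meson mult_pos_pos)
  have "dist (f m) (f n) < e" if "m \<ge> M" "n \<ge> M" for m n
  proof -
    have "dist (x m) (x n) / c < e" using M that assms(3) by (simp add: divide_less_eq mult.commute)
    then show ?thesis using assms(2)[of m n] by linarith
  qed
  then show "\<exists>M. \<forall>m\<ge>M. \<forall>n\<ge>M. dist (f m) (f n) < e" by blast
qed

text \<open>The Hilbert space is given by the axioms \<open>complex_hilbert sm ip\<close> on a real Banach space
  rather than by a type class, so the projection theorem and the Riesz representation theorem
  are derived here from these axioms.\<close>

locale complex_hilbert_space =
  fixes sm :: "complex \<Rightarrow> 'h::banach \<Rightarrow> 'h" and ip :: "'h \<Rightarrow> 'h \<Rightarrow> complex"
  assumes hilbert: "complex_hilbert sm ip"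
begin

lemma sm_assoc: "sm a (sm b x) = sm (a * b) x"
  using hilbert unfolding complex_hilbert_def by fast

lemma sm_one [simp]: "sm 1 x = x"
  using hilbert unfolding complex_hilbert_def by fast

lemma sm_add_right: "sm a (x + y) = sm a x + sm a y"
  using hilbert unfolding complex_hilbert_def by fast

lemma sm_add_left: "sm (a + b) x = sm a x + sm b x"
  using hilbert unfolding complex_hilbert_def by fast

lemma sm_of_real: "sm (complex_of_real r) x = r *\<^sub>R x"
  using hilbert unfolding complex_hilbert_def by fast

lemma ip_add_right: "ip x (y + z) = ip x y + ip x z"
  using hilbert unfolding complex_hilbert_def by fast

lemma ip_sm_right: "ip x (sm a y) = a * ip x y"
  using hilbert unfolding complex_hilbert_def by fast

lemma ip_commute: "ip y x = cnj (ip x y)"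
  using hilbert unfolding complex_hilbert_def by fast

lemma ip_self: "ip x x = complex_of_real ((norm x)\<^sup>2)"
  using hilbert unfolding complex_hilbert_def by fast

lemma sm_zero_left [simp]: "sm 0 x = 0"
  using sm_of_real[of 0 x] by simp

lemma sm_zero_right [simp]: "sm a 0 = 0"
  using sm_add_right[of a 0 0] by simp

lemma sm_minus_left: "sm (- a) x = - sm a x"
  using sm_add_left[of a "- a" x] by (simp add: add.inverse_unique)

lemma sm_minus_right: "sm a (- x) = - sm a x"
  using sm_add_right[of a x "- x"] by (simp add: add.inverse_unique)

lemma sm_diff_right: "sm a (x - y) = sm a x - sm a y"
  using sm_add_right[of a x "- y"] by (simp add: sm_minus_right)

lemma ip_zero_right [simp]: "ip x 0 = 0"
  using ip_add_right[of x 0 0] by simp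

lemma ip_zero_left [simp]: "ip 0 x = 0"
  using ip_commute[of 0 x] by simp

lemma ip_minus_right: "ip x (- y) = - ip x y"
  using ip_add_right[of x y "- y"] by (simp add: add.inverse_unique)

lemma ip_diff_right: "ip x (y - z) = ip x y - ip x z"
  using ip_add_right[of x y "- z"] by (simp add: ip_minus_right)

lemma ip_add_left: "ip (x + y) z = ip x z + ip y z"
  using ip_commute[of "x + y" z] ip_commute[of x z] ip_commute[of y z] ip_add_right[of z x y] by simp

lemma ip_diff_left: "ip (x - y) z = ip x z - ip y z"
  using ip_commute[of "x - y" z] ip_commute[of x z] ip_commute[of y z] ip_diff_right[of z x y] by simp

lemma ip_sm_left: "ip (sm a x) y = cnj a * ip x y"
  using ip_commute[of "sm a x" y] ip_commute[of x y] ip_sm_right[of y a x] by simp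

lemma ip_self_eq_0 [simp]: "ip x x = 0 \<longleftrightarrow> x = 0"
  by (simp add: ip_self)

lemma norm_add_squared: "(norm (x + y))\<^sup>2 = (norm x)\<^sup>2 + (norm y)\<^sup>2 + 2 * Re (ip x y)"
proof -
  have "Re (ip (x + y) (x + y)) = Re (ip x x) + Re (ip x y) + Re (ip y x) + Re (ip y y)"
    by (simp add: ip_add_left ip_add_right)
  moreover have "Re (ip y x) = Re (ip x y)" by (subst ip_commute) simp
  ultimately show ?thesis by (simp add: ip_self)
qed

lemma norm_diff_squared: "(norm (x - y))\<^sup>2 = (norm x)\<^sup>2 + (norm y)\<^sup>2 - 2 * Re (ip x y)"
  using norm_add_squared[of x "- y"] by (simp add: ip_minus_right)

lemma parallelogram_law:
  fixes x y :: 'h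
  shows "(norm (x + y))\<^sup>2 + (norm (x - y))\<^sup>2 = 2 * (norm x)\<^sup>2 + 2 * (norm y)\<^sup>2"
  using norm_add_squared[of x y] norm_diff_squared[of x y] by simp

lemma Re_ip_le: "Re (ip x y) \<le> norm x * norm y"
proof -
  have "(norm x - norm y)\<^sup>2 \<le> (norm (x - y))\<^sup>2"
    using norm_triangle_ineq3[of x y] abs_le_square_iff[of "norm x - norm y" "norm (x - y)"] by simp
  then show ?thesis using norm_diff_squared[of x y] by (simp add: power2_eq_square algebra_simps)
qed

lemma norm_sm: "norm (sm a x) = cmod a * norm x"
proof -
  have "ip (sm a x) (sm a x) = cnj a * a * ip x x" by (simp add: ip_sm_left ip_sm_right)
  also have "cnj a * a = complex_of_real ((cmod a)\<^sup>2)"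
    by (metis complex_norm_square mult.commute of_real_power)
  finally have "(norm (sm a x))\<^sup>2 = (cmod a * norm x)\<^sup>2"
    unfolding ip_self of_real_mult[symmetric] of_real_eq_iff by (simp add: power_mult_distrib)
  then show ?thesis by (rule power2_eq_imp_eq) auto
qed

text \<open>Cauchy--Schwarz: rotate \<open>y\<close> by a unimodular factor making \<open>ip x y\<close> real.\<close>

lemma norm_ip_le: "cmod (ip x y) \<le> norm x * norm y"
proof (cases "ip x y = 0")
  case False
  define u where "u = cnj (ip x y) / cmod (ip x y)"
  have "cnj (ip x y) * ip x y = complex_of_real ((cmod (ip x y))\<^sup>2)"
    by (metis complex_norm_square mult.commute of_real_power)
  then have "cmod (ip x y) = Re (ip x (sm u y))"
    using False by (simp add: u_def ip_sm_right power2_eq_square)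
  also have "\<dots> \<le> norm x * norm (sm u y)" by (rule Re_ip_le)
  also have "\<dots> = norm x * norm y" using False by (simp add: norm_sm u_def norm_divide)
  finally show ?thesis .
qed simp

lemma bounded_linear_ip_right: "bounded_linear (ip x)"
proof
  show "ip x (a + b) = ip x a + ip x b" for a b by (rule ip_add_right)
  show "ip x (r *\<^sub>R b) = r *\<^sub>R ip x b" for r b
    using ip_sm_right[of x "complex_of_real r" b] by (simp add: sm_of_real scaleR_conv_of_real)
  show "\<exists>K. \<forall>y. norm (ip x y) \<le> norm y * K"
    using norm_ip_le by (metis mult.commute)
qed

lemma bounded_linear_sm: "bounded_linear (sm a)"
proof
  show "sm a (x + y) = sm a x + sm a y" for x y by (rule sm_add_right)
  show "sm a (r *\<^sub>R x) = r *\<^sub>R sm a x" for r x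
    by (simp add: sm_of_real[symmetric] sm_assoc mult.commute)
  show "\<exists>K. \<forall>x. norm (sm a x) \<le> norm x * K"
    by (rule exI[of _ "cmod a"]) (simp add: norm_sm mult.commute)
qed

lemma orthogonal_dense_eq_0:
  assumes "closure S = UNIV" and "\<And>s. s \<in> S \<Longrightarrow> ip v s = 0"
  shows "v = 0"
proof -
  have "closed {y. ip v y = 0}"
    using continuous_closed_preimage_constant[OF linear_continuous_on[OF bounded_linear_ip_right]
        closed_UNIV, of v 0] by simp
  then have "closure S \<subseteq> {y. ip v y = 0}"
    using assms(2) by (intro closure_minimal) auto
  then have "ip v v = 0" using assms(1) by blast
  then show ?thesis by simp
qed

lemma csubspace_of_real_scale: "csubspace_on sm M \<Longrightarrow> x \<in> M \<Longrightarrow> r *\<^sub>R x \<in> M"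
  unfolding csubspace_on_def sm_of_real[symmetric] by blast

lemma closest_point_orthogonal:
  assumes M: "csubspace_on sm M" and min: "\<And>m. m \<in> M \<Longrightarrow> norm w \<le> norm (w - m)"
    and m: "m \<in> M"
  shows "ip w m = 0"
proof -
  have Re0: "Re (ip w v) = 0" if v: "v \<in> M" for v
  proof (cases "v = 0")
    case False
    define r where "r = Re (ip w v)"
    define t where "t = r / (norm v)\<^sup>2"
    have "(norm w)\<^sup>2 \<le> (norm (w - t *\<^sub>R v))\<^sup>2"
      using min csubspace_of_real_scale[OF M v] by (simp add: power_mono)
    also have "\<dots> = (norm w)\<^sup>2 + t\<^sup>2 * (norm v)\<^sup>2 - 2 * t * r"
      using ip_sm_right[of w "complex_of_real t" v]
      by (simp add: norm_diff_squared r_def power_mult_distrib sm_of_real)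
    also have "\<dots> = (norm w)\<^sup>2 - r\<^sup>2 / (norm v)\<^sup>2"
      using False by (simp add: t_def power2_eq_square field_simps)
    finally have "r\<^sup>2 / (norm v)\<^sup>2 \<le> 0" by simp
    then show ?thesis using False by (simp add: r_def divide_le_0_iff)
  qed simp
  have "Re (ip w (sm \<i> m)) = 0" using Re0 M m unfolding csubspace_on_def by blast
  then show ?thesis using Re0[OF m] by (simp add: ip_sm_right complex_eq_iff)
qed

lemma minimizing_sequence_Cauchy:
  assumes M: "csubspace_on sm M" and ms: "\<And>k. ms k \<in> M"
    and lower: "\<And>m. m \<in> M \<Longrightarrow> d \<le> (norm (y - m))\<^sup>2"
    and upper: "\<And>k. (norm (y - ms k))\<^sup>2 \<le> d + b k" and b: "b \<longlonglongrightarrow> 0"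
  shows "Cauchy ms"
proof (rule Cauchy_if_dist_le_vanishing)
  have b_nonneg: "0 \<le> b k" for k using lower[OF ms[of k]] upper[of k] by linarith
  show "dist (ms k) (ms l) \<le> sqrt (2 * b k) + sqrt (2 * b l)" for k l
  proof -
    have "(1/2) *\<^sub>R (ms k + ms l) \<in> M"
      using M ms unfolding csubspace_on_def by (blast intro: csubspace_of_real_scale[OF M])
    moreover have "(y - ms k) + (y - ms l) = 2 *\<^sub>R (y - (1/2) *\<^sub>R (ms k + ms l))"
      by (simp add: algebra_simps scaleR_2)
    ultimately have "4 * d \<le> (norm ((y - ms k) + (y - ms l)))\<^sup>2"
      using lower[of "(1/2) *\<^sub>R (ms k + ms l)"] by (simp add: power_mult_distrib)
    then have "(norm (ms k - ms l))\<^sup>2 \<le> 2 * b k + 2 * b l"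
      using parallelogram_law[of "y - ms k" "y - ms l"] upper[of k] upper[of l]
      by (simp add: norm_minus_commute)
    then have "norm (ms k - ms l) \<le> sqrt (2 * b k + 2 * b l)"
      by (simp add: real_le_rsqrt)
    also have "\<dots> \<le> sqrt (2 * b k) + sqrt (2 * b l)"
      using b_nonneg by (simp add: sqrt_add_le_add_sqrt)
    finally show ?thesis by (simp add: dist_norm)
  qed
  show "(\<lambda>k. sqrt (2 * b k)) \<longlonglongrightarrow> 0"
    using tendsto_real_sqrt[OF tendsto_mult_right_zero[OF b, of 2]] by simp
qed

lemma closest_point_exists:
  assumes M: "csubspace_on sm M" and closed: "closed M"
  obtains p where "p \<in> M" "\<And>m. m \<in> M \<Longrightarrow> norm (y - p) \<le> norm (y - m)"
proof -
  define d where "d = (INF m\<in>M. (norm (y - m))\<^sup>2)"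
  have ne: "M \<noteq> {}" using M unfolding csubspace_on_def by blast
  have lower: "d \<le> (norm (y - m))\<^sup>2" if "m \<in> M" for m
    unfolding d_def using that by (intro cINF_lower bdd_belowI2[of _ 0]) auto
  have "\<exists>m\<in>M. (norm (y - m))\<^sup>2 < d + inverse (real (Suc k))" for k
    using cInf_lessD[of "(\<lambda>m. (norm (y - m))\<^sup>2) ` M" "d + inverse (real (Suc k))"] ne
    unfolding d_def by auto
  then obtain ms where ms: "\<And>k. ms k \<in> M"
    and upper: "\<And>k. (norm (y - ms k))\<^sup>2 < d + inverse (real (Suc k))"
    by metis
  have "Cauchy ms"
    using M ms lower upper LIMSEQ_inverse_real_of_nat
    by (intro minimizing_sequence_Cauchy) (auto intro: less_imp_le)
  then obtain p where lim: "ms \<longlonglongrightarrow> p" using convergent_eq_Cauchy by blast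
  have "p \<in> M" using closed_sequentially[OF closed] ms lim by blast
  moreover have "(norm (y - p))\<^sup>2 \<le> d"
  proof (rule LIMSEQ_le)
    show "(\<lambda>k. (norm (y - ms k))\<^sup>2) \<longlonglongrightarrow> (norm (y - p))\<^sup>2" by (intro tendsto_intros lim)
    show "(\<lambda>k. d + inverse (real (Suc k))) \<longlonglongrightarrow> d"
      using tendsto_add[OF tendsto_const LIMSEQ_inverse_real_of_nat, of d] by simp
  qed (use upper less_imp_le in blast)
  ultimately show ?thesis
    using that lower by (meson norm_ge_zero order_trans power2_le_imp_le)
qed

lemma projection_theorem:
  assumes M: "csubspace_on sm M" and closed: "closed M"
  obtains p where "p \<in> M" "\<And>m. m \<in> M \<Longrightarrow> ip (y - p) m = 0"
proof -
  obtain p where p: "p \<in> M" and min: "\<And>m. m \<in> M \<Longrightarrow> norm (y - p) \<le> norm (y - m)"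
    using closest_point_exists[OF M closed] by blast
  have "norm (y - p) \<le> norm (y - p - m)" if "m \<in> M" for m
    using min[of "p + m"] M p that unfolding csubspace_on_def by (simp add: diff_diff_eq)
  then show ?thesis using that p closest_point_orthogonal[OF M] by blast
qed

text \<open>Riesz: the kernel of a nonzero functional has a one-dimensional orthogonal
  complement, spanned by \<open>w\<close>, and \<open>f x w - f w x\<close> lies in the kernel.\<close>

lemma riesz_representation:
  assumes add: "\<And>x y. f (x + y) = f x + f y" and hom: "\<And>a x. f (sm a x) = a * f x"
    and bound: "\<And>x. cmod (f x) \<le> C * norm x"
  obtains g where "\<And>x. ip g x = f x"
proof (cases "\<forall>x. f x = 0")
  case True then show ?thesis using that[of 0] by simp
next
  case False
  then obtain y where fy: "f y \<noteq> 0" by blast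
  have "bounded_linear f"
  proof
    show "f (r *\<^sub>R x) = r *\<^sub>R f x" for r x
      using hom[of "complex_of_real r" x] by (simp add: sm_of_real scaleR_conv_of_real)
    show "\<exists>K. \<forall>x. norm (f x) \<le> norm x * K" using bound by (metis mult.commute)
  qed (rule add)
  define K where "K = {x. f x = 0}"
  have K: "csubspace_on sm K" unfolding csubspace_on_def K_def using add hom[of 0 0] hom by auto
  have "closed K" unfolding K_def
    using continuous_closed_preimage_constant[OF linear_continuous_on[OF \<open>bounded_linear f\<close>]
        closed_UNIV, of 0] by simp
  then obtain p where p: "p \<in> K" and orth: "\<And>m. m \<in> K \<Longrightarrow> ip (y - p) m = 0"
    using projection_theorem[OF K, of y] by blast
  define w where "w = y - p"
  have fw: "f w = f y" using p add[of w p] by (simp add: K_def w_def)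
  then have "w \<noteq> 0" using fy hom[of 0 0] by auto
  have "ip (sm (cnj (f w) / complex_of_real ((norm w)\<^sup>2)) w) x = f x" for x
  proof -
    have "f (sm (f x) w + sm (- f w) x) = 0" by (simp add: add hom)
    then have "ip w (sm (f x) w - sm (f w) x) = 0"
      using orth by (simp add: K_def w_def sm_minus_left)
    then have "f x * complex_of_real ((norm w)\<^sup>2) = f w * ip w x"
      by (simp add: ip_diff_right ip_sm_right ip_self)
    then show ?thesis using \<open>w \<noteq> 0\<close> by (simp add: ip_sm_left field_simps)
  qed
  then show ?thesis by (rule that)
qed

lemma norm_le_if_ip_eq_cinner_vec:
  fixes T :: "'h \<Rightarrow> complex ^ 'n::finite"
  assumes ip: "\<And>\<psi>. ip g \<psi> = cinner_vec \<xi> (T \<psi>)"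
    and T: "\<And>\<psi>. norm (T \<psi>) \<le> C * norm \<psi>" and C: "0 \<le> C"
  shows "norm g \<le> real CARD('n) * norm \<xi> * C"
proof (cases "g = 0")
  case False
  have "(norm g)\<^sup>2 = cmod (ip g g)" by (simp only: ip_self norm_of_real) simp
  also have "\<dots> \<le> real CARD('n) * norm \<xi> * norm (T g)" unfolding ip by (rule norm_cinner_vec_le)
  also have "\<dots> \<le> real CARD('n) * norm \<xi> * C * norm g"
    using T[of g] by (simp add: mult_left_mono mult.assoc)
  finally show ?thesis using False by (simp add: power2_eq_square)
qed (use C in simp)

end


section \<open>Resolvents of a negative definite self-adjoint operator\<close>

locale neg_definite_selfadjoint = complex_hilbert_space sm ip
  for sm :: "complex \<Rightarrow> 'h::banach \<Rightarrow> 'h" and ip +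
  fixes D :: "'h set" and A :: "'h \<Rightarrow> 'h"
  assumes selfadjoint: "self_adjoint_op sm ip D A"
    and neg_definite: "neg_strictly_positive ip D A"
begin

lemma domain_csubspace: "csubspace_on sm D"
  and domain_dense: "closure D = UNIV"
  and A_add: "x \<in> D \<Longrightarrow> y \<in> D \<Longrightarrow> A (x + y) = A x + A y"
  and A_sm: "x \<in> D \<Longrightarrow> A (sm a x) = sm a (A x)"
  and A_symmetric: "x \<in> D \<Longrightarrow> y \<in> D \<Longrightarrow> ip (A x) y = ip x (A y)"
  and adjoint_domain: "(\<And>\<phi>. \<phi> \<in> D \<Longrightarrow> ip (A \<phi>) \<psi> = ip \<phi> \<eta>) \<Longrightarrow> \<psi> \<in> D"
  using selfadjoint unfolding self_adjoint_op_def by blast+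

lemma domain_zero: "0 \<in> D"
  and domain_add: "x \<in> D \<Longrightarrow> y \<in> D \<Longrightarrow> x + y \<in> D"
  and domain_sm: "x \<in> D \<Longrightarrow> sm a x \<in> D"
  using domain_csubspace unfolding csubspace_on_def by blast+

lemma domain_scaleR: "x \<in> D \<Longrightarrow> r *\<^sub>R x \<in> D"
  using domain_sm[of x "complex_of_real r"] by (simp add: sm_of_real)

lemma domain_diff: "x \<in> D \<Longrightarrow> y \<in> D \<Longrightarrow> x - y \<in> D"
  using domain_add[of x "- y"] domain_scaleR[of y "-1"] by simp

lemma A_zero: "A 0 = 0"
  using A_sm[OF domain_zero, of 0] by simp

lemma A_scaleR: "x \<in> D \<Longrightarrow> A (r *\<^sub>R x) = r *\<^sub>R A x"
  using A_sm[of x "complex_of_real r"] by (simp add: sm_of_real)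

lemma A_diff: "x \<in> D \<Longrightarrow> y \<in> D \<Longrightarrow> A (x - y) = A x - A y"
  using A_add[of x "- y"] A_scaleR[of y "-1"] domain_scaleR[of y "-1"] by simp

lemma Im_ip_A_self: "x \<in> D \<Longrightarrow> Im (ip x (A x)) = 0"
  using A_symmetric[of x x] ip_commute[of x "A x"] by (metis cnj.simps(2) neg_equal_zero)

lemma graph_norm_le: "graph_norm A \<phi> \<le> norm \<phi> + norm (A \<phi>)"
  unfolding graph_norm_def by (rule real_le_lsqrt) (auto simp: power2_sum)

text \<open>The points at which the resolvent is used: the non-real ones and \<open>0\<close>, which lies in the
  resolvent set because \<open>-A > 0\<close>.\<close>

definition regular_point :: "complex \<Rightarrow> bool" where
  "regular_point w \<longleftrightarrow> Im w \<noteq> 0 \<or> w = 0"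

lemma regular_point_cnj: "regular_point w \<Longrightarrow> regular_point (cnj w)"
  unfolding regular_point_def by auto

lemma bounded_below_if_ip_bound:
  assumes "\<delta> > 0" and "\<And>\<phi>. \<phi> \<in> D \<Longrightarrow> \<delta> * (norm \<phi>)\<^sup>2 \<le> cmod (ip \<phi> (sm w \<phi> - A \<phi>))"
  shows "\<exists>\<delta>>0. \<forall>\<phi>\<in>D. \<delta> * norm \<phi> \<le> norm (sm w \<phi> - A \<phi>)"
proof (intro exI[of _ \<delta>] conjI ballI)
  fix \<phi> assume "\<phi> \<in> D"
  then have "\<delta> * norm \<phi> * norm \<phi> \<le> cmod (ip \<phi> (sm w \<phi> - A \<phi>))"
    using assms(2) by (simp add: power2_eq_square mult.assoc)
  also have "\<dots> \<le> norm (sm w \<phi> - A \<phi>) * norm \<phi>"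
    using norm_ip_le[of \<phi> "sm w \<phi> - A \<phi>"] by (simp add: mult.commute)
  finally have "\<delta> * norm \<phi> * norm \<phi> \<le> norm (sm w \<phi> - A \<phi>) * norm \<phi>" .
  then show "\<delta> * norm \<phi> \<le> norm (sm w \<phi> - A \<phi>)"
    by (cases "\<phi> = 0") (simp_all add: A_zero)
qed (use assms in simp)

lemma regular_point_bounded_below:
  assumes "regular_point w"
  shows "\<exists>\<delta>>0. \<forall>\<phi>\<in>D. \<delta> * norm \<phi> \<le> norm (sm w \<phi> - A \<phi>)"
proof (cases "w = 0")
  case True
  obtain c where "c > 0" and c: "\<And>\<phi>. \<phi> \<in> D \<Longrightarrow> c * (norm \<phi>)\<^sup>2 \<le> Re (ip \<phi> (- A \<phi>))"
    using neg_definite unfolding neg_strictly_positive_def by blast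
  show ?thesis
  proof (rule bounded_below_if_ip_bound[OF \<open>c > 0\<close>])
    show "c * (norm \<phi>)\<^sup>2 \<le> cmod (ip \<phi> (sm w \<phi> - A \<phi>))" if "\<phi> \<in> D" for \<phi>
      using c[OF that] complex_Re_le_cmod[of "ip \<phi> (- A \<phi>)"] True by simp
  qed
next
  case False
  then have "Im w \<noteq> 0" using assms unfolding regular_point_def by blast
  show ?thesis
  proof (rule bounded_below_if_ip_bound)
    show "\<bar>Im w\<bar> * (norm \<phi>)\<^sup>2 \<le> cmod (ip \<phi> (sm w \<phi> - A \<phi>))" if "\<phi> \<in> D" for \<phi>
    proof -
      have "Im (ip \<phi> (sm w \<phi> - A \<phi>)) = Im w * (norm \<phi>)\<^sup>2"
        using Im_ip_A_self[OF that] by (simp add: ip_diff_right ip_sm_right ip_self)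
      then show ?thesis
        using abs_Im_le_cmod[of "ip \<phi> (sm w \<phi> - A \<phi>)"] by (simp add: abs_mult)
    qed
  qed (use \<open>Im w \<noteq> 0\<close> in simp)
qed

lemma selfadjoint_closed:
  assumes f: "\<And>n. f n \<in> D" and lim: "f \<longlonglongrightarrow> \<phi>" and Alim: "(\<lambda>n. A (f n)) \<longlonglongrightarrow> a"
  shows "\<phi> \<in> D" and "A \<phi> = a"
proof -
  have ip_lim: "ip (A q) \<phi> = ip q a" if "q \<in> D" for q
  proof (rule LIMSEQ_unique)
    show "(\<lambda>n. ip (A q) (f n)) \<longlonglongrightarrow> ip (A q) \<phi>"
      by (rule bounded_linear.tendsto[OF bounded_linear_ip_right lim])
    show "(\<lambda>n. ip (A q) (f n)) \<longlonglongrightarrow> ip q a"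
      using bounded_linear.tendsto[OF bounded_linear_ip_right Alim, of q] A_symmetric[OF that f]
      by simp
  qed
  then show "\<phi> \<in> D" by (rule adjoint_domain)
  have "A \<phi> - a = 0"
  proof (rule orthogonal_dense_eq_0[OF domain_dense])
    fix q assume "q \<in> D"
    then have "ip q (A \<phi> - a) = 0"
      using ip_lim A_symmetric[OF _ \<open>\<phi> \<in> D\<close>] by (simp add: ip_diff_right)
    then show "ip (A \<phi> - a) q = 0" by (subst ip_commute) simp
  qed
  then show "A \<phi> = a" by simp
qed

lemma range_closed:
  assumes "regular_point w"
  shows "closed {sm w \<phi> - A \<phi> | \<phi>. \<phi> \<in> D}"
  unfolding closed_sequential_limits
proof (intro allI impI, elim conjE)
  fix x l assume x: "\<forall>n. x n \<in> {sm w \<phi> - A \<phi> |\<phi>. \<phi> \<in> D}" and lim: "x \<longlonglongrightarrow> l"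
  obtain \<delta> where "\<delta> > 0" and below: "\<And>\<phi>. \<phi> \<in> D \<Longrightarrow> \<delta> * norm \<phi> \<le> norm (sm w \<phi> - A \<phi>)"
    using regular_point_bounded_below[OF assms] by blast
  have "\<forall>n. \<exists>\<phi>. \<phi> \<in> D \<and> x n = sm w \<phi> - A \<phi>" using x by blast
  then obtain f where f: "\<And>n. f n \<in> D" and fx: "\<And>n. x n = sm w (f n) - A (f n)"
    by (metis choice)
  have dist_f: "dist (f m) (f n) \<le> dist (x m) (x n) / \<delta>" for m n
  proof -
    have "sm w (f m - f n) - A (f m - f n) = x m - x n"
      by (simp add: fx A_diff[OF f f] sm_diff_right algebra_simps)
    then have "\<delta> * dist (f m) (f n) \<le> dist (x m) (x n)"
      using below[OF domain_diff[OF f f], of m n] by (simp add: dist_norm)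
    then show ?thesis using \<open>\<delta> > 0\<close> by (simp add: field_simps)
  qed
  have "Cauchy f"
    using LIMSEQ_imp_Cauchy[OF lim] dist_f \<open>\<delta> > 0\<close> by (rule Cauchy_if_dist_le_scaled)
  then obtain \<phi> where "f \<longlonglongrightarrow> \<phi>" using convergent_eq_Cauchy by blast
  moreover have "(\<lambda>n. A (f n)) \<longlonglongrightarrow> sm w \<phi> - l"
  proof -
    have "(\<lambda>n. sm w (f n) - x n) \<longlonglongrightarrow> sm w \<phi> - l"
      by (intro tendsto_diff bounded_linear.tendsto[OF bounded_linear_sm] \<open>f \<longlonglongrightarrow> \<phi>\<close> lim)
    then show ?thesis by (simp add: fx)
  qed
  ultimately have "\<phi> \<in> D" "A \<phi> = sm w \<phi> - l" using selfadjoint_closed f by blast+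
  then show "l \<in> {sm w \<phi> - A \<phi> |\<phi>. \<phi> \<in> D}" by force
qed

lemma range_csubspace: "csubspace_on sm {sm w \<phi> - A \<phi> | \<phi>. \<phi> \<in> D}"
  unfolding csubspace_on_def
proof (intro conjI ballI allI)
  show "0 \<in> {sm w \<phi> - A \<phi> |\<phi>. \<phi> \<in> D}" using domain_zero A_zero by force
next
  fix x y assume "x \<in> {sm w \<phi> - A \<phi> |\<phi>. \<phi> \<in> D}" "y \<in> {sm w \<phi> - A \<phi> |\<phi>. \<phi> \<in> D}"
  then obtain a b where "a \<in> D" "b \<in> D" "x = sm w a - A a" "y = sm w b - A b" by blast
  then show "x + y \<in> {sm w \<phi> - A \<phi> |\<phi>. \<phi> \<in> D}"
    by (intro CollectI exI[of _ "a + b"]) (auto simp: domain_add A_add sm_add_right)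
next
  fix c x assume "x \<in> {sm w \<phi> - A \<phi> |\<phi>. \<phi> \<in> D}"
  then obtain a where "a \<in> D" "x = sm w a - A a" by blast
  then show "sm c x \<in> {sm w \<phi> - A \<phi> |\<phi>. \<phi> \<in> D}"
    by (intro CollectI exI[of _ "sm c a"]) (auto simp: domain_sm A_sm sm_diff_right sm_assoc mult.commute)
qed

text \<open>A vector orthogonal to the range of \<open>w - A\<close> is an eigenvector of \<open>A\<close> for \<open>cnj w\<close>.\<close>

lemma orthogonal_range_eq_0:
  assumes "regular_point w" and orth: "\<And>\<phi>. \<phi> \<in> D \<Longrightarrow> ip v (sm w \<phi> - A \<phi>) = 0"
  shows "v = 0"
proof -
  have adj: "ip (A \<phi>) v = ip \<phi> (sm (cnj w) v)" if "\<phi> \<in> D" for \<phi>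
  proof -
    have "ip (sm w \<phi> - A \<phi>) v = 0"
      using orth[OF that] ip_commute[of v "sm w \<phi> - A \<phi>"] by simp
    then show ?thesis by (simp add: ip_diff_left ip_sm_left ip_sm_right)
  qed
  then have "v \<in> D" by (rule adjoint_domain)
  have "A v - sm (cnj w) v = 0"
  proof (rule orthogonal_dense_eq_0[OF domain_dense])
    fix s assume "s \<in> D"
    then have "ip s (A v - sm (cnj w) v) = 0"
      using adj A_symmetric[OF _ \<open>v \<in> D\<close>] by (simp add: ip_diff_right)
    then show "ip (A v - sm (cnj w) v) s = 0" by (subst ip_commute) simp
  qed
  moreover obtain \<delta> where "\<delta> > 0" "\<And>\<phi>. \<phi> \<in> D \<Longrightarrow> \<delta> * norm \<phi> \<le> norm (sm (cnj w) \<phi> - A \<phi>)"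
    using regular_point_bounded_below[OF regular_point_cnj[OF assms(1)]] by blast
  ultimately show "v = 0" using \<open>v \<in> D\<close> by (force simp: mult_le_0_iff)
qed

lemma resolvent_equation_ex1:
  assumes "regular_point w"
  shows "\<exists>!\<phi>. \<phi> \<in> D \<and> sm w \<phi> - A \<phi> = \<psi>"
proof -
  let ?R = "{sm w \<phi> - A \<phi> | \<phi>. \<phi> \<in> D}"
  obtain p where "p \<in> ?R" and orth: "\<And>m. m \<in> ?R \<Longrightarrow> ip (\<psi> - p) m = 0"
    using projection_theorem[OF range_csubspace range_closed[OF assms], of \<psi>] by blast
  have "\<psi> - p = 0" using orth by (intro orthogonal_range_eq_0[OF assms]) blast
  with \<open>p \<in> ?R\<close> obtain \<phi> where \<phi>: "\<phi> \<in> D" "sm w \<phi> - A \<phi> = \<psi>" by auto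
  obtain \<delta> where "\<delta> > 0" and below: "\<And>\<phi>. \<phi> \<in> D \<Longrightarrow> \<delta> * norm \<phi> \<le> norm (sm w \<phi> - A \<phi>)"
    using regular_point_bounded_below[OF assms] by blast
  have "\<phi>' = \<phi>" if "\<phi>' \<in> D" "sm w \<phi>' - A \<phi>' = \<psi>" for \<phi>'
  proof -
    have "sm w (\<phi>' - \<phi>) - A (\<phi>' - \<phi>) = 0"
      using that \<phi> by (simp add: A_diff sm_diff_right algebra_simps)
    then show ?thesis
      using below[OF domain_diff[OF that(1) \<phi>(1)]] \<open>\<delta> > 0\<close> by (simp add: mult_le_0_iff)
  qed
  with \<phi> show ?thesis by blast
qed

abbreviation R :: "complex \<Rightarrow> 'h \<Rightarrow> 'h" where
  "R w \<equiv> resolv sm D A w"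

lemma resolvent_in_domain: "regular_point w \<Longrightarrow> R w \<psi> \<in> D"
  and resolvent_eq: "regular_point w \<Longrightarrow> sm w (R w \<psi>) - A (R w \<psi>) = \<psi>"
  unfolding resolv_def using theI'[OF resolvent_equation_ex1] by blast+

lemma resolvent_unique: "regular_point w \<Longrightarrow> \<phi> \<in> D \<Longrightarrow> sm w \<phi> - A \<phi> = \<psi> \<Longrightarrow> R w \<psi> = \<phi>"
  unfolding resolv_def by (rule the1_equality[OF resolvent_equation_ex1]) auto

lemma resolvent_add:
  assumes w: "regular_point w"
  shows "R w (x + y) = R w x + R w y"
proof (rule resolvent_unique[OF w])
  show "R w x + R w y \<in> D" by (simp add: domain_add resolvent_in_domain[OF w])
  have "sm w (R w x + R w y) - A (R w x + R w y)
      = (sm w (R w x) - A (R w x)) + (sm w (R w y) - A (R w y))"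
    by (simp add: A_add resolvent_in_domain[OF w] sm_add_right algebra_simps)
  then show "sm w (R w x + R w y) - A (R w x + R w y) = x + y"
    by (simp only: resolvent_eq[OF w])
qed

lemma resolvent_sm:
  assumes w: "regular_point w"
  shows "R w (sm a x) = sm a (R w x)"
proof (rule resolvent_unique[OF w])
  show "sm a (R w x) \<in> D" by (simp add: domain_sm resolvent_in_domain[OF w])
  have "sm w (sm a (R w x)) - A (sm a (R w x)) = sm a (sm w (R w x) - A (R w x))"
    by (simp add: A_sm resolvent_in_domain[OF w] sm_assoc sm_diff_right mult.commute)
  then show "sm w (sm a (R w x)) - A (sm a (R w x)) = sm a x"
    by (simp only: resolvent_eq[OF w])
qed

lemma resolvent_scaleR: "regular_point w \<Longrightarrow> R w (r *\<^sub>R x) = r *\<^sub>R R w x"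
  using resolvent_sm[of w "complex_of_real r" x] by (simp add: sm_of_real)

lemma resolvent_zero: "regular_point w \<Longrightarrow> R w 0 = 0"
  using resolvent_scaleR[of w 0 0] by simp

lemma resolvent_diff: "regular_point w \<Longrightarrow> R w (x - y) = R w x - R w y"
  using resolvent_add[of w x "(-1) *\<^sub>R y"] resolvent_scaleR[of w "-1" y] by simp

lemma resolvent_bound:
  assumes "regular_point w"
  obtains C where "C > 0" "\<And>\<psi>. norm (R w \<psi>) \<le> C * norm \<psi>"
proof -
  obtain \<delta> where "\<delta> > 0" and below: "\<And>\<phi>. \<phi> \<in> D \<Longrightarrow> \<delta> * norm \<phi> \<le> norm (sm w \<phi> - A \<phi>)"
    using regular_point_bounded_below[OF assms] by blast
  have "norm (R w \<psi>) \<le> (1 / \<delta>) * norm \<psi>" for \<psi>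
    using below[OF resolvent_in_domain[OF assms]] resolvent_eq[OF assms] \<open>\<delta> > 0\<close>
    by (simp add: field_simps)
  then show ?thesis by (rule that[rotated]) (use \<open>\<delta> > 0\<close> in simp)
qed

lemma bounded_linear_resolvent: "regular_point w \<Longrightarrow> bounded_linear (R w)"
  by (unfold_locales, simp_all add: resolvent_add resolvent_scaleR)
    (metis resolvent_bound mult.commute)

lemma graph_norm_resolvent_le:
  assumes "regular_point w"
  obtains K where "K \<ge> 0" "\<And>\<psi>. graph_norm A (R w \<psi>) \<le> K * norm \<psi>"
proof -
  obtain C where "C > 0" and C: "\<And>\<psi>. norm (R w \<psi>) \<le> C * norm \<psi>"
    using resolvent_bound[OF assms] by blast
  have "graph_norm A (R w \<psi>) \<le> (C + cmod w * C + 1) * norm \<psi>" for \<psi>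
  proof -
    have "A (R w \<psi>) = sm w (R w \<psi>) - \<psi>"
      using resolvent_eq[OF assms, of \<psi>] by (simp add: algebra_simps)
    then have "norm (A (R w \<psi>)) \<le> cmod w * norm (R w \<psi>) + norm \<psi>"
      using norm_triangle_ineq4[of "sm w (R w \<psi>)" \<psi>] by (simp add: norm_sm)
    then show ?thesis
      using graph_norm_le[of "R w \<psi>"] C[of \<psi>] mult_left_mono[OF C[of \<psi>], of "cmod w"]
      by (simp add: algebra_simps)
  qed
  then show ?thesis using that \<open>C > 0\<close> by (meson add_nonneg_nonneg less_imp_le mult_nonneg_nonneg norm_ge_zero zero_le_one)
qed

end


context neg_definite_selfadjoint
begin

lemma graph_norm_nonneg: "0 \<le> graph_norm A \<phi>"
  by (simp add: graph_norm_def)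

lemma graph_norm_eq_0_iff: "graph_norm A \<phi> = 0 \<longleftrightarrow> \<phi> = 0 \<and> A \<phi> = 0"
  unfolding graph_norm_def by (simp add: add_nonneg_eq_0_iff)

lemma graph_norm_scaleR: "\<phi> \<in> D \<Longrightarrow> graph_norm A (r *\<^sub>R \<phi>) = \<bar>r\<bar> * graph_norm A \<phi>"
  unfolding graph_norm_def
  by (simp add: A_scaleR power_mult_distrib real_sqrt_mult flip: distrib_left)

lemma norm_le_graph_op_norm:
  assumes scale: "\<And>r \<phi>. \<phi> \<in> D \<Longrightarrow> f (r *\<^sub>R \<phi>) = r *\<^sub>R f \<phi>"
    and bounded: "\<And>\<phi>. \<phi> \<in> D \<Longrightarrow> norm (f \<phi>) \<le> C * graph_norm A \<phi>" and "\<phi> \<in> D"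
  shows "norm (f \<phi>) \<le> graph_op_norm D A f * graph_norm A \<phi>"
proof (cases "graph_norm A \<phi> = 0")
  case True
  then have "\<phi> = 0" by (simp add: graph_norm_eq_0_iff)
  then show ?thesis using scale[OF domain_zero, of 0] True by simp
next
  case False
  define g where "g = graph_norm A \<phi>"
  have "g > 0" using False graph_norm_nonneg[of \<phi>] by (simp add: g_def)
  let ?S = "{norm (f \<phi>) | \<phi>. \<phi> \<in> D \<and> graph_norm A \<phi> \<le> 1}"
  have "bdd_above ?S"
  proof (rule bdd_aboveI)
    fix x assume "x \<in> ?S"
    then obtain \<phi> where "\<phi> \<in> D" "graph_norm A \<phi> \<le> 1" "x = norm (f \<phi>)" by blast
    then have "x \<le> \<bar>C\<bar> * graph_norm A \<phi>"
      using bounded[of \<phi>] mult_right_mono[OF abs_ge_self graph_norm_nonneg] by (blast intro: order_trans)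
    also have "\<dots> \<le> \<bar>C\<bar>" using \<open>graph_norm A \<phi> \<le> 1\<close> by (simp add: mult_left_le)
    finally show "x \<le> \<bar>C\<bar>" .
  qed
  moreover have "norm (f ((1 / g) *\<^sub>R \<phi>)) \<in> ?S"
    using \<open>g > 0\<close> \<open>\<phi> \<in> D\<close> domain_scaleR by (force simp: graph_norm_scaleR g_def)
  ultimately have "norm (f ((1 / g) *\<^sub>R \<phi>)) \<le> graph_op_norm D A f"
    unfolding graph_op_norm_def by (rule cSup_upper[rotated])
  then show ?thesis using \<open>g > 0\<close> scale[OF \<open>\<phi> \<in> D\<close>] by (simp add: g_def field_simps)
qed

end

section \<open>Boundary maps and the operator \<open>G\<close>\<close>

locale boundary_map = neg_definite_selfadjoint sm ip D A
  for sm :: "complex \<Rightarrow> 'h::banach \<Rightarrow> 'h" and ip D A +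
  fixes \<tau> :: "'h \<Rightarrow> complex ^ 'n::finite"
  assumes admissible: "admissible sm D A \<tau>"
begin

lemma \<tau>_add: "x \<in> D \<Longrightarrow> y \<in> D \<Longrightarrow> \<tau> (x + y) = \<tau> x + \<tau> y"
  and \<tau>_sm: "x \<in> D \<Longrightarrow> \<tau> (sm a x) = a *s \<tau> x"
  and \<tau>_surj: "\<tau> ` D = UNIV"
  and \<tau>_bounded: "\<exists>C. \<forall>\<phi>\<in>D. norm (\<tau> \<phi>) \<le> C * graph_norm A \<phi>"
  and kernel_dense: "closure {\<phi>\<in>D. \<tau> \<phi> = 0} = UNIV"
  using admissible unfolding admissible_def by blast+

lemma \<tau>_scaleR: "x \<in> D \<Longrightarrow> \<tau> (r *\<^sub>R x) = r *\<^sub>R \<tau> x"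
  using \<tau>_sm[of x "complex_of_real r"] by (simp add: sm_of_real smult_of_real)

lemma \<tau>_diff: "x \<in> D \<Longrightarrow> y \<in> D \<Longrightarrow> \<tau> (x - y) = \<tau> x - \<tau> y"
  using \<tau>_add[of x "- y"] \<tau>_scaleR[of y "-1"] domain_scaleR[of y "-1"] by simp

lemma \<tau>_zero: "\<tau> 0 = 0"
  using \<tau>_scaleR[OF domain_zero, of 0] by simp

lemma bounded_linear_\<tau>_resolvent:
  assumes w: "regular_point w"
  shows "bounded_linear (\<lambda>\<psi>. \<tau> (R w \<psi>))"
proof
  show "\<tau> (R w (x + y)) = \<tau> (R w x) + \<tau> (R w y)" for x y
    by (simp add: resolvent_add[OF w] \<tau>_add resolvent_in_domain[OF w])
  show "\<tau> (R w (r *\<^sub>R x)) = r *\<^sub>R \<tau> (R w x)" for r x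
    by (simp add: resolvent_scaleR[OF w] \<tau>_scaleR resolvent_in_domain[OF w])
  obtain C where C: "\<And>\<phi>. \<phi> \<in> D \<Longrightarrow> norm (\<tau> \<phi>) \<le> C * graph_norm A \<phi>" using \<tau>_bounded by blast
  obtain K where "K \<ge> 0" and K: "\<And>\<psi>. graph_norm A (R w \<psi>) \<le> K * norm \<psi>"
    using graph_norm_resolvent_le[OF w] by blast
  have "norm (\<tau> (R w \<psi>)) \<le> norm \<psi> * (\<bar>C\<bar> * K)" for \<psi>
  proof -
    have "norm (\<tau> (R w \<psi>)) \<le> \<bar>C\<bar> * graph_norm A (R w \<psi>)"
      using C[OF resolvent_in_domain[OF w]] mult_right_mono[OF abs_ge_self graph_norm_nonneg]
      by (rule order_trans)
    also have "\<dots> \<le> \<bar>C\<bar> * (K * norm \<psi>)" by (rule mult_left_mono[OF K]) simp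
    finally show ?thesis by (simp add: ac_simps)
  qed
  then show "\<exists>K. \<forall>\<psi>. norm (\<tau> (R w \<psi>)) \<le> norm \<psi> * K" by blast
qed

lemma regular_point_0: "regular_point 0"
  by (simp add: regular_point_def)

text \<open>\<open>G = G\<^sub>0\<close> is the adjoint of \<open>\<tau> R\<^sub>0 = \<tau> (-A)\<^sup>-\<^sup>1\<close>.\<close>

definition G :: "complex ^ 'n \<Rightarrow> 'h" where
  "G \<xi> = Gmap sm ip D A \<tau> 0 \<xi>"

lemma G_ex1: "\<exists>!g. \<forall>\<psi>. ip g \<psi> = cinner_vec \<xi> (\<tau> (R 0 \<psi>))"
proof -
  interpret T: bounded_linear "\<lambda>\<psi>. \<tau> (R 0 \<psi>)" by (rule bounded_linear_\<tau>_resolvent[OF regular_point_0])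
  obtain C where C: "\<And>\<psi>. norm (\<tau> (R 0 \<psi>)) \<le> norm \<psi> * C" using T.bounded by blast
  have bound: "cmod (cinner_vec \<xi> (\<tau> (R 0 x))) \<le> (real CARD('n) * norm \<xi> * C) * norm x" for x
  proof -
    have "cmod (cinner_vec \<xi> (\<tau> (R 0 x))) \<le> real CARD('n) * norm \<xi> * norm (\<tau> (R 0 x))"
      by (rule norm_cinner_vec_le)
    also have "\<dots> \<le> real CARD('n) * norm \<xi> * (norm x * C)" by (rule mult_left_mono[OF C]) simp
    finally show ?thesis by (simp add: ac_simps)
  qed
  obtain g where "\<And>\<psi>. ip g \<psi> = cinner_vec \<xi> (\<tau> (R 0 \<psi>))"
  proof (rule riesz_representation[OF _ _ bound])
    show "cinner_vec \<xi> (\<tau> (R 0 (x + y))) = cinner_vec \<xi> (\<tau> (R 0 x)) + cinner_vec \<xi> (\<tau> (R 0 y))" for x y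
      by (simp add: T.add cinner_vec_add_right)
    show "cinner_vec \<xi> (\<tau> (R 0 (sm a x))) = a * cinner_vec \<xi> (\<tau> (R 0 x))" for a x
      by (simp add: resolvent_sm[OF regular_point_0] \<tau>_sm resolvent_in_domain[OF regular_point_0]
          cinner_vec_smult_right)
  qed blast
  moreover have "g' = g" if "\<forall>\<psi>. ip g' \<psi> = cinner_vec \<xi> (\<tau> (R 0 \<psi>))"
    and "\<forall>\<psi>. ip g \<psi> = cinner_vec \<xi> (\<tau> (R 0 \<psi>))" for g g'
    using that ip_self_eq_0[of "g' - g"] by (simp add: ip_diff_left)
  ultimately show ?thesis by blast
qed

lemma ip_G: "ip (G \<xi>) \<psi> = cinner_vec \<xi> (\<tau> (R 0 \<psi>))"
  using theI'[OF G_ex1[of \<xi>]] unfolding G_def Gmap_def by simp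

lemma G_unique: "(\<And>\<psi>. ip g \<psi> = cinner_vec \<xi> (\<tau> (R 0 \<psi>))) \<Longrightarrow> G \<xi> = g"
  using G_ex1[of \<xi>] ip_G[of \<xi>] by blast

lemma G_add: "G (\<xi> + \<eta>) = G \<xi> + G \<eta>"
  by (rule G_unique) (simp add: ip_add_left ip_G cinner_vec_add_left)

lemma G_smult: "G (a *s \<xi>) = sm a (G \<xi>)"
  by (rule G_unique) (simp add: ip_sm_left ip_G cinner_vec_smult_left)

lemma bounded_linear_G: "bounded_linear G"
proof
  show "G (x + y) = G x + G y" for x y by (rule G_add)
  show "G (r *\<^sub>R x) = r *\<^sub>R G x" for r x
    using G_smult[of "complex_of_real r" x] by (simp add: sm_of_real smult_of_real)
  interpret T: bounded_linear "\<lambda>\<psi>. \<tau> (R 0 \<psi>)" by (rule bounded_linear_\<tau>_resolvent[OF regular_point_0])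
  obtain C where "C > 0" and C: "\<And>\<psi>. norm (\<tau> (R 0 \<psi>)) \<le> norm \<psi> * C" using T.pos_bounded by blast
  have "norm (G \<xi>) \<le> norm \<xi> * (real CARD('n) * C)" for \<xi>
    using norm_le_if_ip_eq_cinner_vec[OF ip_G, of C] C \<open>C > 0\<close> by (simp add: ac_simps)
  then show "\<exists>K. \<forall>\<xi>. norm (G \<xi>) \<le> norm \<xi> * K" by blast
qed

lemma ip_G_A: "\<phi> \<in> D \<Longrightarrow> ip (G \<xi>) (A \<phi>) = - cinner_vec \<xi> (\<tau> \<phi>)"
  using ip_G[of \<xi> "- A \<phi>"] resolvent_unique[OF regular_point_0, of \<phi> "- A \<phi>"]
  by (simp add: ip_minus_right) (metis minus_minus)

text \<open>\<open>G\<close> maps into \<open>D\<close> only trivially: if \<open>G \<eta> \<in> D\<close> then \<open>A G \<eta>\<close> is orthogonal to the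
  dense kernel of \<open>\<tau>\<close>, so \<open>\<eta>\<close> is orthogonal to the range of \<open>\<tau>\<close>, which is everything.\<close>

lemma G_in_domain_imp_zero:
  assumes "G \<eta> \<in> D"
  shows "\<eta> = 0"
proof -
  have ip_AG: "ip (A (G \<eta>)) \<phi> = - cinner_vec \<eta> (\<tau> \<phi>)" if "\<phi> \<in> D" for \<phi>
    using A_symmetric[OF assms that] ip_G_A[OF that] by simp
  have "A (G \<eta>) = 0"
    by (rule orthogonal_dense_eq_0[OF kernel_dense]) (simp add: ip_AG)
  then have "cnj (\<eta> $ i) = 0" for i
    using \<tau>_surj ip_AG cinner_vec_axis[of \<eta> i] by (metis UNIV_I imageE ip_zero_left neg_equal_0_iff_equal)
  then show ?thesis by (simp add: vec_eq_iff)
qed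

lemma domain_G_decomposition_unique:
  assumes "\<phi>0 \<in> D" "\<phi>1 \<in> D" "\<phi>0 + G \<xi>0 = \<phi>1 + G \<xi>1"
  shows "\<xi>0 = \<xi>1" and "\<phi>0 = \<phi>1"
proof -
  have "G \<xi>0 - G \<xi>1 = \<phi>1 - \<phi>0" using assms(3) by (simp add: algebra_simps)
  then have "G (\<xi>0 - \<xi>1) = \<phi>1 - \<phi>0"
    by (simp add: linear_diff[OF bounded_linear.linear[OF bounded_linear_G]])
  then have "\<xi>0 - \<xi>1 = 0" using domain_diff[OF assms(2,1)] by (intro G_in_domain_imp_zero) simp
  then show "\<xi>0 = \<xi>1" by simp
  then show "\<phi>0 = \<phi>1" using assms(3) by simp
qed

end


section \<open>The extension \<open>A\<^sup>\<Pi>\<^sup>,\<^sup>\<Theta>\<close> and its resolvent\<close>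

locale boundary_extension = boundary_map sm ip D A \<tau>
  for sm :: "complex \<Rightarrow> 'h::banach \<Rightarrow> 'h" and ip D A and \<tau> :: "'h \<Rightarrow> complex ^ 'n::finite" +
  fixes P \<Theta> :: "complex ^ 'n ^ 'n" and z :: complex
  assumes projector: "ortho_projector P" and symmetric: "symmetric_on_ran P \<Theta>"
    and nonreal: "Im z \<noteq> 0"
begin

lemma regular_point_z: "regular_point z"
  using nonreal by (simp add: regular_point_def)

lemma P_idem: "P *v (P *v x) = P *v x"
  using projector unfolding ortho_projector_def by (simp add: matrix_vector_mul_assoc)

lemma P_\<Theta>: "P *v (\<Theta> *v x) = \<Theta> *v x"
  using symmetric unfolding symmetric_on_ran_def by (simp add: matrix_vector_mul_assoc)

lemma bounded_linear_R_z: "bounded_linear (R z)"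
  and bounded_linear_\<tau>_R_z: "bounded_linear (\<lambda>\<psi>. \<tau> (R z \<psi>))"
  using bounded_linear_resolvent bounded_linear_\<tau>_resolvent regular_point_z by blast+

text \<open>On \<open>Ran \<Pi>\<close>, \<open>krein\<close> is the matrix \<open>\<Theta> + z \<Pi> G\<^sub>0\<^sup>* G\<^sub>z \<Pi>\<close> of Krein's formula, because
  \<open>G\<^sub>0\<^sup>* = \<tau> R\<^sub>0\<close> and \<open>G\<^sub>0\<^sup>* G\<^sub>z = \<tau> R\<^sub>z G\<^sub>0\<close> by the resolvent identity; \<open>krein_ext\<close> extends it by
  the identity on \<open>Ker \<Pi>\<close>.\<close>

definition krein :: "complex ^ 'n \<Rightarrow> complex ^ 'n" where
  "krein \<xi> = \<Theta> *v \<xi> + z *s (P *v \<tau> (R z (G \<xi>)))"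

definition krein_ext :: "complex ^ 'n \<Rightarrow> complex ^ 'n" where
  "krein_ext x = krein (P *v x) + (x - P *v x)"

lemma bounded_linear_krein: "bounded_linear krein"
  unfolding krein_def
  by (intro bounded_linear_add bounded_linear_matrix_vector_mult
      bounded_linear_compose[OF bounded_linear_vector_smult]
      bounded_linear_compose[OF bounded_linear_matrix_vector_mult]
      bounded_linear_compose[OF bounded_linear_\<tau>_R_z bounded_linear_G])

lemma bounded_linear_krein_ext: "bounded_linear krein_ext"
  unfolding krein_ext_def
  by (intro bounded_linear_add bounded_linear_sub bounded_linear_ident bounded_linear_matrix_vector_mult
      bounded_linear_compose[OF bounded_linear_krein])

lemma P_krein: "P *v krein \<xi> = krein \<xi>"
  unfolding krein_def by (simp add: matrix_vector_right_distrib P_\<Theta> vector_scalar_commute P_idem)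

lemma P_krein_ext: "P *v krein_ext x = krein (P *v x)"
  by (simp add: krein_ext_def matrix_vector_right_distrib matrix_vector_mult_diff_distrib P_krein P_idem)

lemma boundary_condition_iff:
  "P *v \<tau> (R z (\<psi> - sm z (G \<xi>))) = \<Theta> *v \<xi> \<longleftrightarrow> krein \<xi> = P *v \<tau> (R z \<psi>)"
proof -
  have "P *v \<tau> (R z (\<psi> - sm z (G \<xi>))) = P *v \<tau> (R z \<psi>) - z *s (P *v \<tau> (R z (G \<xi>)))"
    by (simp add: resolvent_diff resolvent_sm regular_point_z \<tau>_diff \<tau>_sm resolvent_in_domain
        domain_sm matrix_vector_mult_diff_distrib vector_scalar_commute)
  then show ?thesis unfolding krein_def by (auto simp: diff_eq_eq)
qed

text \<open>If \<open>krein \<xi> = 0\<close> then \<open>u = \<phi>\<^sub>0 + G \<xi>\<close> with \<open>\<phi>\<^sub>0 = -z R\<^sub>z G \<xi>\<close> satisfies \<open>A \<phi>\<^sub>0 = z u\<close>, and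
  \<open>ip u (A \<phi>\<^sub>0)\<close> is real by the symmetry of \<open>A\<close> and of \<open>\<Theta>\<close>; as \<open>z\<close> is not real, \<open>u = 0\<close>.\<close>

lemma krein_eq_0_imp_zero:
  assumes P\<xi>: "P *v \<xi> = \<xi>" and krein: "krein \<xi> = 0"
  shows "\<xi> = 0"
proof -
  define \<phi>0 where "\<phi>0 = R z (0 - sm z (G \<xi>))"
  define u where "u = \<phi>0 + G \<xi>"
  have \<phi>0: "\<phi>0 \<in> D" unfolding \<phi>0_def by (rule resolvent_in_domain[OF regular_point_z])
  have cond: "P *v \<tau> \<phi>0 = \<Theta> *v \<xi>"
    unfolding \<phi>0_def boundary_condition_iff using krein
    by (simp add: resolvent_zero[OF regular_point_z] \<tau>_zero)
  have "sm z \<phi>0 - A \<phi>0 = 0 - sm z (G \<xi>)"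
    unfolding \<phi>0_def by (rule resolvent_eq[OF regular_point_z])
  then have Au: "A \<phi>0 = sm z u" by (simp add: u_def sm_add_right algebra_simps)
  have "ip (G \<xi>) (A \<phi>0) = - cinner_vec (P *v \<xi>) (\<tau> \<phi>0)" using P\<xi> by (simp add: ip_G_A[OF \<phi>0])
  also have "\<dots> = - cinner_vec \<xi> (\<Theta> *v \<xi>)"
    using projector unfolding ortho_projector_def by (simp add: cinner_vec_hermitian cond)
  finally have "Im (ip (G \<xi>) (A \<phi>0)) = 0"
    using symmetric Im_cinner_vec_hermitian[of \<Theta> \<xi>] unfolding symmetric_on_ran_def by simp
  then have "Im (ip u (A \<phi>0)) = 0" using Im_ip_A_self[OF \<phi>0] by (simp add: u_def ip_add_left)
  then have "Im z * (norm u)\<^sup>2 = 0" by (simp add: Au ip_sm_right ip_self)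
  then have "G \<xi> = - \<phi>0" using nonreal by (simp add: u_def eq_neg_iff_add_eq_0 add.commute)
  then show ?thesis using domain_scaleR[OF \<phi>0, of "-1"] G_in_domain_imp_zero by simp
qed

lemma inj_krein_ext: "inj krein_ext"
proof (rule injI)
  have krein_ext_eq_0: "x = 0" if "krein_ext x = 0" for x
  proof -
    have "krein (P *v x) = 0" using P_krein_ext[of x] that by simp
    then have "P *v x = 0" using krein_eq_0_imp_zero[OF P_idem] by blast
    moreover have "krein 0 = 0" by (rule linear_0[OF bounded_linear.linear[OF bounded_linear_krein]])
    ultimately show ?thesis using that by (simp add: krein_ext_def)
  qed
  fix x y assume "krein_ext x = krein_ext y"
  then have "krein_ext (x - y) = 0"
    by (simp add: linear_diff[OF bounded_linear.linear[OF bounded_linear_krein_ext]])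
  then show "x = y" using krein_ext_eq_0[of "x - y"] by simp
qed

lemma krein_ext_inv_in_range:
  assumes "P *v y = y"
  shows "P *v inv krein_ext y = inv krein_ext y" and "krein (inv krein_ext y) = y"
proof -
  have "surj krein_ext"
    by (rule eucl.linear_inj_imp_surj[OF bounded_linear.linear[OF bounded_linear_krein_ext] inj_krein_ext])
  then have inv: "krein_ext (inv krein_ext y) = y" by (rule surj_f_inv_f)
  then have "krein (P *v inv krein_ext y) = y" using assms P_krein_ext[of "inv krein_ext y"] by simp
  with inv show P: "P *v inv krein_ext y = inv krein_ext y" by (simp add: krein_ext_def)
  show "krein (inv krein_ext y) = y" using \<open>krein (P *v inv krein_ext y) = y\<close> by (simp only: P)
qed

lemma ext_op_eq:
  assumes "\<phi>0 \<in> D" "P *v \<xi> = \<xi>" "P *v \<tau> \<phi>0 = \<Theta> *v \<xi>"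
  shows "ext_op sm ip D A \<tau> P \<Theta> (\<phi>0 + G \<xi>) = A \<phi>0"
  unfolding ext_op_def G_def[symmetric]
proof (rule someI2[where a = \<phi>0])
  show "\<phi>0 \<in> D \<and> (\<exists>\<xi>'. P *v \<xi>' = \<xi>' \<and> P *v \<tau> \<phi>0 = \<Theta> *v \<xi>' \<and> \<phi>0 + G \<xi> = \<phi>0 + G \<xi>')"
    using assms by blast
qed (use domain_G_decomposition_unique(2)[OF assms(1)] in metis)

lemma ext_dom_iff:
  "u \<in> ext_dom sm ip D A \<tau> P \<Theta> \<longleftrightarrow>
     (\<exists>\<phi>0 \<xi>. u = \<phi>0 + G \<xi> \<and> \<phi>0 \<in> D \<and> P *v \<xi> = \<xi> \<and> P *v \<tau> \<phi>0 = \<Theta> *v \<xi>)"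
  unfolding ext_dom_def G_def by blast

lemma extension_equation_iff:
  assumes "\<phi>0 \<in> D" "P *v \<xi> = \<xi>"
  shows "(P *v \<tau> \<phi>0 = \<Theta> *v \<xi> \<and> sm z (\<phi>0 + G \<xi>) - ext_op sm ip D A \<tau> P \<Theta> (\<phi>0 + G \<xi>) = \<psi>)
     \<longleftrightarrow> (\<phi>0 = R z (\<psi> - sm z (G \<xi>)) \<and> krein \<xi> = P *v \<tau> (R z \<psi>))"
proof -
  have eqn: "sm z (\<phi>0 + G \<xi>) - A \<phi>0 = \<psi> \<longleftrightarrow> \<phi>0 = R z (\<psi> - sm z (G \<xi>))"
  proof
    assume "sm z (\<phi>0 + G \<xi>) - A \<phi>0 = \<psi>"
    then have "sm z \<phi>0 - A \<phi>0 = \<psi> - sm z (G \<xi>)" by (simp add: sm_add_right algebra_simps)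
    then show "\<phi>0 = R z (\<psi> - sm z (G \<xi>))"
      using resolvent_unique[OF regular_point_z assms(1)] by simp
  next
    assume "\<phi>0 = R z (\<psi> - sm z (G \<xi>))"
    then show "sm z (\<phi>0 + G \<xi>) - A \<phi>0 = \<psi>"
      using resolvent_eq[OF regular_point_z, of "\<psi> - sm z (G \<xi>)"] by (simp add: sm_add_right algebra_simps)
  qed
  show ?thesis
  proof
    assume "P *v \<tau> \<phi>0 = \<Theta> *v \<xi> \<and> sm z (\<phi>0 + G \<xi>) - ext_op sm ip D A \<tau> P \<Theta> (\<phi>0 + G \<xi>) = \<psi>"
    then show "\<phi>0 = R z (\<psi> - sm z (G \<xi>)) \<and> krein \<xi> = P *v \<tau> (R z \<psi>)"
      using ext_op_eq[OF assms] eqn boundary_condition_iff by metis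
  next
    assume "\<phi>0 = R z (\<psi> - sm z (G \<xi>)) \<and> krein \<xi> = P *v \<tau> (R z \<psi>)"
    then show "P *v \<tau> \<phi>0 = \<Theta> *v \<xi> \<and> sm z (\<phi>0 + G \<xi>) - ext_op sm ip D A \<tau> P \<Theta> (\<phi>0 + G \<xi>) = \<psi>"
      using ext_op_eq[OF assms] eqn boundary_condition_iff by metis
  qed
qed

text \<open>\<open>G\<^sub>z = G - z R\<^sub>z G\<close> is the map \<open>(\<tau> R\<^bsub>cnj z\<^esub>)\<^sup>*\<close>, so the following is Krein's
  formula \<open>R\<^sub>z + G\<^sub>z \<Pi> (\<Theta> + z \<Pi> G\<^sub>0\<^sup>* G\<^sub>z \<Pi>)\<^sup>-\<^sup>1 \<Pi> G\<^bsub>cnj z\<^esub>\<^sup>*\<close> for the resolvent of \<open>A\<^sup>\<Pi>\<^sup>,\<^sup>\<Theta>\<close>.\<close>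

definition G_z :: "complex ^ 'n \<Rightarrow> 'h" where
  "G_z \<xi> = G \<xi> - sm z (R z (G \<xi>))"

lemma extension_resolvent:
  "resolv sm (ext_dom sm ip D A \<tau> P \<Theta>) (ext_op sm ip D A \<tau> P \<Theta>) z
     = (\<lambda>\<psi>. R z \<psi> + G_z (inv krein_ext (P *v \<tau> (R z \<psi>))))"
proof
  fix \<psi>
  define \<xi> where "\<xi> = inv krein_ext (P *v \<tau> (R z \<psi>))"
  have P\<xi>: "P *v \<xi> = \<xi>" and krein\<xi>: "krein \<xi> = P *v \<tau> (R z \<psi>)"
    unfolding \<xi>_def by (simp_all add: krein_ext_inv_in_range P_idem)
  define \<phi>0 where "\<phi>0 = R z (\<psi> - sm z (G \<xi>))"
  have \<phi>0: "\<phi>0 \<in> D" unfolding \<phi>0_def by (rule resolvent_in_domain[OF regular_point_z])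
  have "\<phi>0 + G \<xi> = R z \<psi> + G_z \<xi>"
    by (simp add: \<phi>0_def G_z_def resolvent_diff resolvent_sm regular_point_z)
  moreover have "resolv sm (ext_dom sm ip D A \<tau> P \<Theta>) (ext_op sm ip D A \<tau> P \<Theta>) z \<psi> = \<phi>0 + G \<xi>"
    unfolding resolv_def
  proof (rule the_equality)
    show "\<phi>0 + G \<xi> \<in> ext_dom sm ip D A \<tau> P \<Theta> \<and>
        sm z (\<phi>0 + G \<xi>) - ext_op sm ip D A \<tau> P \<Theta> (\<phi>0 + G \<xi>) = \<psi>"
      using extension_equation_iff[OF \<phi>0 P\<xi>] krein\<xi> \<phi>0 P\<xi> by (auto simp: ext_dom_iff \<phi>0_def)
  next
    fix u assume "u \<in> ext_dom sm ip D A \<tau> P \<Theta> \<and> sm z u - ext_op sm ip D A \<tau> P \<Theta> u = \<psi>"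
    then obtain \<phi>1 \<xi>1 where u: "u = \<phi>1 + G \<xi>1" and \<phi>1: "\<phi>1 \<in> D" and P\<xi>1: "P *v \<xi>1 = \<xi>1"
      and "P *v \<tau> \<phi>1 = \<Theta> *v \<xi>1" "sm z (\<phi>1 + G \<xi>1) - ext_op sm ip D A \<tau> P \<Theta> (\<phi>1 + G \<xi>1) = \<psi>"
      unfolding ext_dom_iff by blast
    then have \<phi>1_eq: "\<phi>1 = R z (\<psi> - sm z (G \<xi>1))" and "krein \<xi>1 = P *v \<tau> (R z \<psi>)"
      using extension_equation_iff[OF \<phi>1 P\<xi>1] by blast+
    then have "krein (\<xi>1 - \<xi>) = 0"
      using krein\<xi> linear_diff[OF bounded_linear.linear[OF bounded_linear_krein]] by simp
    then have "\<xi>1 = \<xi>"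
      using krein_eq_0_imp_zero[of "\<xi>1 - \<xi>"] P\<xi> P\<xi>1 by (simp add: matrix_vector_mult_diff_distrib)
    then show "u = \<phi>0 + G \<xi>" by (simp add: u \<phi>1_eq \<phi>0_def)
  qed
  ultimately show "resolv sm (ext_dom sm ip D A \<tau> P \<Theta>) (ext_op sm ip D A \<tau> P \<Theta>) z \<psi>
      = R z \<psi> + G_z (inv krein_ext (P *v \<tau> (R z \<psi>)))"
    by (simp add: \<xi>_def)
qed

end


section \<open>Norm resolvent convergence\<close>

locale approximating_boundary_maps = neg_definite_selfadjoint sm ip D A
  for sm :: "complex \<Rightarrow> 'h::banach \<Rightarrow> 'h" and ip D A +
  fixes \<tau>s :: "nat \<Rightarrow> 'h \<Rightarrow> complex ^ 'n::finite" and \<tau> :: "'h \<Rightarrow> complex ^ 'n"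
  assumes admissible_seq: "\<And>N. N \<ge> 1 \<Longrightarrow> admissible sm D A (\<tau>s N)"
    and admissible_limit: "admissible sm D A \<tau>"
    and graph_op_norm_tendsto: "(\<lambda>N. graph_op_norm D A (\<lambda>\<phi>. \<tau>s N \<phi> - \<tau> \<phi>)) \<longlonglongrightarrow> 0"
begin

sublocale limit: boundary_map sm ip D A \<tau>
  by unfold_locales (rule admissible_limit)

lemma boundary_map_seq: "N \<ge> 1 \<Longrightarrow> boundary_map sm ip D A (\<tau>s N)"
  by unfold_locales (rule admissible_seq)

lemma eventually_boundary_map_seq: "\<forall>\<^sub>F N in sequentially. boundary_map sm ip D A (\<tau>s N)"
  using eventually_ge_at_top[of 1] by eventually_elim (rule boundary_map_seq)

lemma op_tendsto_\<tau>_resolvent: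
  assumes w: "regular_point w"
  shows "op_tendsto (\<lambda>N \<psi>. \<tau>s N (R w \<psi>)) (\<lambda>\<psi>. \<tau> (R w \<psi>))"
proof -
  let ?\<epsilon> = "\<lambda>N. graph_op_norm D A (\<lambda>\<phi>. \<tau>s N \<phi> - \<tau> \<phi>)"
  obtain K where "K \<ge> 0" and K: "\<And>\<psi>. graph_norm A (R w \<psi>) \<le> K * norm \<psi>"
    using graph_norm_resolvent_le[OF w] by blast
  show ?thesis
  proof (rule op_tendstoI)
    show "\<forall>\<^sub>F N in sequentially. bounded_linear (\<lambda>\<psi>. \<tau>s N (R w \<psi>))"
      using eventually_boundary_map_seq
      by eventually_elim (rule boundary_map.bounded_linear_\<tau>_resolvent[OF _ w])
    show "bounded_linear (\<lambda>\<psi>. \<tau> (R w \<psi>))" by (rule limit.bounded_linear_\<tau>_resolvent[OF w])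
    show "\<forall>\<^sub>F N in sequentially. \<forall>\<psi>. norm (\<tau>s N (R w \<psi>) - \<tau> (R w \<psi>)) \<le> (\<bar>?\<epsilon> N\<bar> * K) * norm \<psi>"
      using eventually_boundary_map_seq
    proof (eventually_elim, intro allI)
      case (elim N)
      interpret TN: boundary_map sm ip D A "\<tau>s N" by (rule elim)
      obtain C1 C2 where C1: "\<And>\<phi>. \<phi> \<in> D \<Longrightarrow> norm (\<tau>s N \<phi>) \<le> C1 * graph_norm A \<phi>"
        and C2: "\<And>\<phi>. \<phi> \<in> D \<Longrightarrow> norm (\<tau> \<phi>) \<le> C2 * graph_norm A \<phi>"
        using TN.\<tau>_bounded limit.\<tau>_bounded by blast
      fix \<psi>
      have "norm (\<tau>s N (R w \<psi>) - \<tau> (R w \<psi>)) \<le> ?\<epsilon> N * graph_norm A (R w \<psi>)"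
      proof (rule norm_le_graph_op_norm[OF _ _ resolvent_in_domain[OF w]])
        show "\<tau>s N (r *\<^sub>R \<phi>) - \<tau> (r *\<^sub>R \<phi>) = r *\<^sub>R (\<tau>s N \<phi> - \<tau> \<phi>)" if "\<phi> \<in> D" for r \<phi>
          using that by (simp add: TN.\<tau>_scaleR limit.\<tau>_scaleR scaleR_diff_right)
        show "norm (\<tau>s N \<phi> - \<tau> \<phi>) \<le> (C1 + C2) * graph_norm A \<phi>" if "\<phi> \<in> D" for \<phi>
          using norm_triangle_ineq4[of "\<tau>s N \<phi>" "\<tau> \<phi>"] C1[OF that] C2[OF that]
          by (simp add: distrib_right)
      qed
      also have "\<dots> \<le> \<bar>?\<epsilon> N\<bar> * (K * norm \<psi>)"
        by (intro mult_mono abs_ge_self K graph_norm_nonneg) simp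
      finally show "norm (\<tau>s N (R w \<psi>) - \<tau> (R w \<psi>)) \<le> (\<bar>?\<epsilon> N\<bar> * K) * norm \<psi>"
        by (simp add: mult.assoc)
    qed
    show "(\<lambda>N. \<bar>?\<epsilon> N\<bar> * K) \<longlonglongrightarrow> 0"
      using tendsto_mult_left_zero[OF tendsto_rabs_zero[OF graph_op_norm_tendsto]] by simp
  qed
qed

lemma op_tendsto_G: "op_tendsto (\<lambda>N. boundary_map.G sm ip D A (\<tau>s N)) limit.G"
proof -
  let ?\<epsilon> = "\<lambda>N. onorm (\<lambda>\<psi>. \<tau>s N (R 0 \<psi>) - \<tau> (R 0 \<psi>))"
  have T: "op_tendsto (\<lambda>N \<psi>. \<tau>s N (R 0 \<psi>)) (\<lambda>\<psi>. \<tau> (R 0 \<psi>))"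
    by (rule op_tendsto_\<tau>_resolvent[OF limit.regular_point_0])
  show ?thesis
  proof (rule op_tendstoI)
    show "\<forall>\<^sub>F N in sequentially. bounded_linear (boundary_map.G sm ip D A (\<tau>s N))"
      using eventually_boundary_map_seq by eventually_elim (rule boundary_map.bounded_linear_G)
    show "bounded_linear limit.G" by (rule limit.bounded_linear_G)
    show "\<forall>\<^sub>F N in sequentially. \<forall>\<xi>. norm (boundary_map.G sm ip D A (\<tau>s N) \<xi> - limit.G \<xi>)
        \<le> (real CARD('n) * ?\<epsilon> N) * norm \<xi>"
      using eventually_boundary_map_seq op_tendsto_bounded_linear(1)[OF T]
    proof (eventually_elim, intro allI)
      case (elim N)
      interpret TN: boundary_map sm ip D A "\<tau>s N" using elim by blast
      have diff: "bounded_linear (\<lambda>\<psi>. \<tau>s N (R 0 \<psi>) - \<tau> (R 0 \<psi>))"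
        using elim limit.bounded_linear_\<tau>_resolvent[OF limit.regular_point_0] bounded_linear_sub by blast
      fix \<xi>
      have "norm (TN.G \<xi> - limit.G \<xi>) \<le> real CARD('n) * norm \<xi> * ?\<epsilon> N"
      proof (rule norm_le_if_ip_eq_cinner_vec)
        show "ip (TN.G \<xi> - limit.G \<xi>) \<psi> = cinner_vec \<xi> (\<tau>s N (R 0 \<psi>) - \<tau> (R 0 \<psi>))" for \<psi>
          by (simp add: ip_diff_left TN.ip_G limit.ip_G cinner_vec_diff_right)
      qed (use onorm[OF diff] onorm_pos_le[OF diff] in auto)
      then show "norm (TN.G \<xi> - limit.G \<xi>) \<le> (real CARD('n) * ?\<epsilon> N) * norm \<xi>"
        by (simp add: ac_simps)
    qed
    show "(\<lambda>N. real CARD('n) * ?\<epsilon> N) \<longlonglongrightarrow> 0"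
      using tendsto_mult_right_zero[OF op_tendsto_onorm[OF T]] by simp
  qed
qed

end

locale approximating_extensions = approximating_boundary_maps sm ip D A \<tau>s \<tau>
  for sm :: "complex \<Rightarrow> 'h::banach \<Rightarrow> 'h" and ip D A
    and \<tau>s :: "nat \<Rightarrow> 'h \<Rightarrow> complex ^ 'n::finite" and \<tau> +
  fixes P :: "complex ^ 'n ^ 'n" and \<Theta>s :: "nat \<Rightarrow> complex ^ 'n ^ 'n" and \<Theta> z
  assumes projector: "ortho_projector P"
    and symmetric_seq: "\<And>N. N \<ge> 1 \<Longrightarrow> symmetric_on_ran P (\<Theta>s N)"
    and symmetric_limit: "symmetric_on_ran P \<Theta>" and \<Theta>_tendsto: "\<Theta>s \<longlonglongrightarrow> \<Theta>"
    and nonreal: "Im z \<noteq> 0"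
begin

sublocale limit: boundary_extension sm ip D A \<tau> P \<Theta> z
  by unfold_locales (use projector symmetric_limit nonreal in auto)

lemma eventually_boundary_extension_seq:
  "\<forall>\<^sub>F N in sequentially. boundary_extension sm ip D A (\<tau>s N) P (\<Theta>s N) z"
  using eventually_ge_at_top[of 1]
proof eventually_elim
  case (elim N)
  interpret boundary_map sm ip D A "\<tau>s N" using boundary_map_seq[OF elim] .
  show ?case by unfold_locales (use projector symmetric_seq[OF elim] nonreal in auto)
qed

lemma op_tendsto_krein_ext:
  "op_tendsto (\<lambda>N. boundary_extension.krein_ext sm ip D A (\<tau>s N) P (\<Theta>s N) z) limit.krein_ext"
proof (rule op_tendsto_cong)
  let ?P = "\<lambda>N x. P *v x"
  have P: "op_tendsto ?P (\<lambda>x. P *v x)" by (intro op_tendsto_const bounded_linear_matrix_vector_mult)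
  have "op_tendsto (\<lambda>N \<xi>. \<Theta>s N *v \<xi> + z *s (P *v \<tau>s N (R z (boundary_map.G sm ip D A (\<tau>s N) \<xi>))))
      limit.krein"
    unfolding limit.krein_def
    by (intro op_tendsto_add op_tendsto_matrix_vector_mult[OF \<Theta>_tendsto] op_tendsto_compose[OF _ op_tendsto_G]
        op_tendsto_compose[OF op_tendsto_const[OF bounded_linear_vector_smult]]
        op_tendsto_compose[OF P] op_tendsto_\<tau>_resolvent limit.regular_point_z)
  then show "op_tendsto (\<lambda>N x. \<Theta>s N *v (P *v x)
        + z *s (P *v \<tau>s N (R z (boundary_map.G sm ip D A (\<tau>s N) (P *v x)))) + (x - P *v x))
      limit.krein_ext"
    unfolding limit.krein_ext_def[abs_def]
    by (intro op_tendsto_add op_tendsto_compose[OF _ P] op_tendsto_const bounded_linear_sub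
        bounded_linear_ident bounded_linear_matrix_vector_mult)
  show "\<forall>\<^sub>F N in sequentially. (\<lambda>x. \<Theta>s N *v (P *v x)
        + z *s (P *v \<tau>s N (R z (boundary_map.G sm ip D A (\<tau>s N) (P *v x)))) + (x - P *v x))
      = boundary_extension.krein_ext sm ip D A (\<tau>s N) P (\<Theta>s N) z"
    using eventually_boundary_extension_seq
    by eventually_elim (simp add: fun_eq_iff boundary_extension.krein_ext_def boundary_extension.krein_def)
qed

lemma op_tendsto_extension_resolvent:
  "op_tendsto (\<lambda>N. resolv sm (ext_dom sm ip D A (\<tau>s N) P (\<Theta>s N)) (ext_op sm ip D A (\<tau>s N) P (\<Theta>s N)) z)
     (resolv sm (ext_dom sm ip D A \<tau> P \<Theta>) (ext_op sm ip D A \<tau> P \<Theta>) z)"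
proof (rule op_tendsto_cong)
  let ?K = "\<lambda>x. x - sm z (R z x)"
  have K: "bounded_linear ?K"
    by (intro bounded_linear_sub bounded_linear_ident bounded_linear_compose[OF bounded_linear_sm]
        limit.bounded_linear_R_z)
  have inv: "op_tendsto (\<lambda>N. inv (boundary_extension.krein_ext sm ip D A (\<tau>s N) P (\<Theta>s N) z))
      (inv limit.krein_ext)"
  proof (rule op_tendsto_inv[OF _ limit.inj_krein_ext op_tendsto_krein_ext])
    show "\<forall>\<^sub>F N in sequentially. inj (boundary_extension.krein_ext sm ip D A (\<tau>s N) P (\<Theta>s N) z)"
      using eventually_boundary_extension_seq by eventually_elim (rule boundary_extension.inj_krein_ext)
  qed
  show "op_tendsto (\<lambda>N \<psi>. R z \<psi> + ?K (boundary_map.G sm ip D A (\<tau>s N)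
        (inv (boundary_extension.krein_ext sm ip D A (\<tau>s N) P (\<Theta>s N) z) (P *v \<tau>s N (R z \<psi>)))))
      (resolv sm (ext_dom sm ip D A \<tau> P \<Theta>) (ext_op sm ip D A \<tau> P \<Theta>) z)"
    unfolding limit.extension_resolvent limit.G_z_def
    by (intro op_tendsto_add op_tendsto_const limit.bounded_linear_R_z
        op_tendsto_compose[OF op_tendsto_const[OF K]] op_tendsto_compose[OF op_tendsto_G]
        op_tendsto_compose[OF inv] op_tendsto_compose[OF op_tendsto_const[OF bounded_linear_matrix_vector_mult]]
        op_tendsto_\<tau>_resolvent limit.regular_point_z)
  show "\<forall>\<^sub>F N in sequentially. (\<lambda>\<psi>. R z \<psi> + ?K (boundary_map.G sm ip D A (\<tau>s N)
        (inv (boundary_extension.krein_ext sm ip D A (\<tau>s N) P (\<Theta>s N) z) (P *v \<tau>s N (R z \<psi>)))))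
      = resolv sm (ext_dom sm ip D A (\<tau>s N) P (\<Theta>s N)) (ext_op sm ip D A (\<tau>s N) P (\<Theta>s N)) z"
    using eventually_boundary_extension_seq
    by eventually_elim (simp add: boundary_extension.extension_resolvent boundary_extension.G_z_def)
qed

end

theorem lemma4p5:
  fixes sm :: "complex \<Rightarrow> 'h::banach \<Rightarrow> 'h" and ip :: "'h \<Rightarrow> 'h \<Rightarrow> complex"
    and D :: "'h set" and A :: "'h \<Rightarrow> 'h"
    and \<tau>s :: "nat \<Rightarrow> 'h \<Rightarrow> complex ^ 'n::finite" and \<tau> :: "'h \<Rightarrow> complex ^ 'n"
    and P :: "complex ^ 'n ^ 'n" and \<Theta>s :: "nat \<Rightarrow> complex ^ 'n ^ 'n" and \<Theta> :: "complex ^ 'n ^ 'n"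
  assumes "complex_hilbert sm ip"
    and "self_adjoint_op sm ip D A"
    and "neg_strictly_positive ip D A"
    and "\<And>N. N \<ge> 1 \<Longrightarrow> admissible sm D A (\<tau>s N)"
    and "admissible sm D A \<tau>"
    and "(\<lambda>N. graph_op_norm D A (\<lambda>\<phi>. \<tau>s N \<phi> - \<tau> \<phi>)) \<longlonglongrightarrow> 0"
    and "ortho_projector P"
    and "\<And>N. N \<ge> 1 \<Longrightarrow> symmetric_on_ran P (\<Theta>s N)"
    and "symmetric_on_ran P \<Theta>"
    and "\<Theta>s \<longlonglongrightarrow> \<Theta>"
  shows "norm_resolvent_conv sm
           (\<lambda>N. ext_dom sm ip D A (\<tau>s N) P (\<Theta>s N)) (\<lambda>N. ext_op sm ip D A (\<tau>s N) P (\<Theta>s N))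
           (ext_dom sm ip D A \<tau> P \<Theta>) (ext_op sm ip D A \<tau> P \<Theta>)"
  unfolding norm_resolvent_conv_def
proof (intro allI impI)
  fix z :: complex assume "Im z \<noteq> 0"
  interpret approximating_extensions sm ip D A \<tau>s \<tau> P \<Theta>s \<Theta> z
    by unfold_locales (use assms \<open>Im z \<noteq> 0\<close> in auto)
  show "(\<lambda>N. onorm (\<lambda>\<psi>. resolv sm (ext_dom sm ip D A (\<tau>s N) P (\<Theta>s N)) (ext_op sm ip D A (\<tau>s N) P (\<Theta>s N)) z \<psi>
      - resolv sm (ext_dom sm ip D A \<tau> P \<Theta>) (ext_op sm ip D A \<tau> P \<Theta>) z \<psi>)) \<longlonglongrightarrow> 0"
    by (rule op_tendsto_onorm[OF op_tendsto_extension_resolvent])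
qed

end
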